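(* Let $G$ be a finitely generated PA (resp. EPA) group and $\mathcal A$ a finite set. Then every $G$-process $(G,\mathcal A,\mu)$ admits a residually finite model (resp. an ergodically residually finite model).
   Context: $G$ acts on $\mathcal A^G$ by $(h.\omega)(g)=\omega(gh)$; a $G$-process $(G,\mathcal A,\mu)$ has $\mu$ a $G$-invariant Borel probability measure. A measure is periodic if it is invariant with finite support, ergodic if invariant sets have measure 0 or 1. $G$ is PA (resp. EPA) if for every finite $\mathcal A$ the periodic (resp. periodic ergodic) measures are weak* dense in the set of invariant probability measures on $\mathcal A^G$. A residually finite approximation of $G$: finite-index normal subgroups $\Gamma_n$ with $\Gamma_{n+1}\le\Gamma_n$, $\bigcap_n\Gamma_n=\{e\}$, $V_n=G/\Gamma_n$ and $\sigma_n^g(v\Gamma_n)=gv\Gamma_n$. For $\rho\in\mathcal A^{V_n}$: $\Pi^{\sigma_n}_v(\rho)=(\rho(\sigma_n^g(v)))_{g\in G}$ and $P_\rho^{\sigma_n}=\frac1{|V_n|}\sum_v\delta_{\Pi_v^{\sigma_n}(\rho)}$. A residually finite model (resp. ergodically residually finite model) for $(G,\mathcal A,\mu)$ is $(V_n,\sigma_n,\mu_n)$ with $(V_n,\sigma_n)$ a residually finite approximation, $\mu_n\in\mathrm{Prob}(\mathcal A^{V_n})$ invariant under the action of the finite group $V_n$ by $(w.\rho)(v)=\rho(vw)$, and such that for every weak* neighbourhood $\mathcal O$ of $\mu$, $|\{v:(\Pi_v^{\sigma_n})_*\mu_n\in\mathcal O\}|/|V_n|\to1$ (resp. additionally $\mu_n(\{\rho:P^{\sigma_n}_\rho\in\mathcal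 O\})\to1$). *)

theory Defs
  imports "HOL-Probability.Probability"
begin

text \<open>Groups are types of class group_add (the group operation is written +, neutral
  element 0; commutativity is NOT assumed).  Alphabets are finite subsets of a type
  carrying the discrete topology; A^G is the set of all functions G \<Rightarrow> A with the
  product topology (the library's topology on function spaces).\<close>

inductive_set gen_subgroup :: "'g::group_add set \<Rightarrow> 'g set" for S where
  gen_zero: "0 \<in> gen_subgroup S"
| gen_base: "s \<in> S \<Longrightarrow> s \<in> gen_subgroup S"
| gen_add: "x \<in> gen_subgroup S \<Longrightarrow> y \<in> gen_subgroup S \<Longrightarrow> x + y \<in> gen_subgroup S"
| gen_uminus: "x \<in> gen_subgroup S \<Longrightarrow> - x \<in> gen_subgroup S"

definition finitely_generated :: "'g::group_add itself \<Rightarrow> bool" where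
  "finitely_generated _ \<longleftrightarrow> (\<exists>S::'g set. finite S \<and> gen_subgroup S = UNIV)"

definition config :: "'a set \<Rightarrow> ('g \<Rightarrow> 'a) set" where
  "config A = {\<omega>. \<forall>g. \<omega> g \<in> A}"

definition shift_space :: "'a::topological_space set \<Rightarrow> ('g \<Rightarrow> 'a) measure" where
  "shift_space A = restrict_space borel (config A)"

definition shift_act :: "'g::group_add \<Rightarrow> ('g \<Rightarrow> 'a) \<Rightarrow> ('g \<Rightarrow> 'a)" where
  "shift_act h \<omega> = (\<lambda>g. \<omega> (g + h))"

definition prob_on :: "'a::topological_space set \<Rightarrow> ('g \<Rightarrow> 'a) measure \<Rightarrow> bool" where
  "prob_on A \<mu> \<longleftrightarrow> prob_space \<mu> \<and> sets \<mu> = sets (shift_space A)"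

definition invariant_measure ::
  "'a::topological_space set \<Rightarrow> ('g::group_add \<Rightarrow> 'a) measure \<Rightarrow> bool" where
  "invariant_measure A \<mu> \<longleftrightarrow> prob_on A \<mu> \<and>
     (\<forall>h. distr \<mu> (shift_space A) (shift_act h) = \<mu>)"

definition periodic_measure ::
  "'a::topological_space set \<Rightarrow> ('g::group_add \<Rightarrow> 'a) measure \<Rightarrow> bool" where
  "periodic_measure A \<mu> \<longleftrightarrow> invariant_measure A \<mu> \<and>
     (\<exists>S. finite S \<and> S \<in> sets \<mu> \<and> measure \<mu> S = 1)"

definition ergodic_measure ::
  "'a::topological_space set \<Rightarrow> ('g::group_add \<Rightarrow> 'a) measure \<Rightarrow> bool" where
  "ergodic_measure A \<mu> \<longleftrightarrow> invariant_measure A \<mu> \<and>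
     (\<forall>X\<in>sets \<mu>. (\<forall>h. shift_act h ` X = X) \<longrightarrow> measure \<mu> X = 0 \<or> measure \<mu> X = 1)"

definition cont_funs :: "'a::topological_space set \<Rightarrow> (('g \<Rightarrow> 'a) \<Rightarrow> real) set" where
  "cont_funs A = {f. continuous_on (config A) f}"

text \<open>Basic weak* neighbourhood of \<mu> determined by a finite set F of continuous
  functions and \<epsilon> > 0; these form a neighbourhood base of the weak* topology.\<close>
definition weak_nbhd ::
  "'a::topological_space set \<Rightarrow> ('g \<Rightarrow> 'a) measure \<Rightarrow> (('g \<Rightarrow> 'a) \<Rightarrow> real) set \<Rightarrow> real
     \<Rightarrow> ('g \<Rightarrow> 'a) measure set" where
  "weak_nbhd A \<mu> F \<epsilon> = {\<nu>. prob_on A \<nu> \<and>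
      (\<forall>f\<in>F. \<bar>(\<integral>\<omega>. f \<omega> \<partial>\<nu>) - (\<integral>\<omega>. f \<omega> \<partial>\<mu>)\<bar> < \<epsilon>)}"

text \<open>Every finite alphabet is in bijection with a finite set of naturals, so
  quantifying over finite A :: nat set covers all finite alphabets.\<close>
definition PA :: "'g::group_add itself \<Rightarrow> bool" where
  "PA _ \<longleftrightarrow> (\<forall>(A::nat set) (\<mu>::('g \<Rightarrow> nat) measure). finite A \<longrightarrow> invariant_measure A \<mu> \<longrightarrow>
     (\<forall>F \<epsilon>. finite F \<longrightarrow> F \<subseteq> cont_funs A \<longrightarrow> \<epsilon> > 0 \<longrightarrow>
        (\<exists>\<nu>. periodic_measure A \<nu> \<and> \<nu> \<in> weak_nbhd A \<mu> F \<epsilon>)))"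

definition EPA :: "'g::group_add itself \<Rightarrow> bool" where
  "EPA _ \<longleftrightarrow> (\<forall>(A::nat set) (\<mu>::('g \<Rightarrow> nat) measure). finite A \<longrightarrow> invariant_measure A \<mu> \<longrightarrow>
     (\<forall>F \<epsilon>. finite F \<longrightarrow> F \<subseteq> cont_funs A \<longrightarrow> \<epsilon> > 0 \<longrightarrow>
        (\<exists>\<nu>. periodic_measure A \<nu> \<and> ergodic_measure A \<nu> \<and> \<nu> \<in> weak_nbhd A \<mu> F \<epsilon>)))"

definition normal_subgroup :: "'g::group_add set \<Rightarrow> bool" where
  "normal_subgroup H \<longleftrightarrow> 0 \<in> H \<and> (\<forall>x\<in>H. \<forall>y\<in>H. x + y \<in> H) \<and> (\<forall>x\<in>H. - x \<in> H)
     \<and> (\<forall>g. \<forall>x\<in>H. g + x - g \<in> H)"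

definition coset :: "'g::group_add \<Rightarrow> 'g set \<Rightarrow> 'g set" where
  "coset v H = (\<lambda>x. v + x) ` H"

definition quot :: "'g::group_add set \<Rightarrow> 'g set set" where
  "quot H = range (\<lambda>v. coset v H)"

text \<open>Product of cosets (equals (vw)\<Gamma> for normal \<Gamma>).\<close>
definition coset_mult :: "'g::group_add set \<Rightarrow> 'g set \<Rightarrow> 'g set" where
  "coset_mult C D = {c + d | c d. c \<in> C \<and> d \<in> D}"

definition sigma :: "'g::group_add \<Rightarrow> 'g set \<Rightarrow> 'g set" where
  "sigma g C = (\<lambda>x. g + x) ` C"

definition rf_approx :: "(nat \<Rightarrow> 'g::group_add set) \<Rightarrow> bool" where
  "rf_approx \<Gamma> \<longleftrightarrow> (\<forall>n. normal_subgroup (\<Gamma> n) \<and> finite (quot (\<Gamma> n)) \<and> \<Gamma> (Suc n) \<subseteq> \<Gamma> n)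
     \<and> (\<Inter>n. \<Gamma> n) = {0}"

definition Pi_v :: "'g::group_add set \<Rightarrow> ('g set \<Rightarrow> 'a) \<Rightarrow> ('g \<Rightarrow> 'a)" where
  "Pi_v v \<rho> = (\<lambda>g. \<rho> (sigma g v))"

definition fin_config_space :: "'g set set \<Rightarrow> 'a set \<Rightarrow> ('g set \<Rightarrow> 'a) measure" where
  "fin_config_space V A = count_space (V \<rightarrow>\<^sub>E A)"

text \<open>P_\<rho> = (1/|V|) \<Sum>_v \<delta>_{\<Pi>_v(\<rho>)}: image of the uniform measure on V under v \<mapsto> \<Pi>_v \<rho>.\<close>
definition empirical :: "'a::topological_space set \<Rightarrow> 'g::group_add set set \<Rightarrow> ('g set \<Rightarrow> 'a)
     \<Rightarrow> ('g \<Rightarrow> 'a) measure" where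
  "empirical A V \<rho> = distr (uniform_count_measure V) (shift_space A) (\<lambda>v. Pi_v v \<rho>)"

definition model_seq :: "'a set \<Rightarrow> (nat \<Rightarrow> 'g::group_add set) \<Rightarrow> (nat \<Rightarrow> ('g set \<Rightarrow> 'a) measure) \<Rightarrow> bool" where
  "model_seq A \<Gamma> \<mu>s \<longleftrightarrow> (\<forall>n. prob_space (\<mu>s n)
      \<and> sets (\<mu>s n) = sets (fin_config_space (quot (\<Gamma> n)) A)
      \<and> (\<forall>w\<in>quot (\<Gamma> n).
           distr (\<mu>s n) (\<mu>s n) (\<lambda>\<rho>. \<lambda>v\<in>quot (\<Gamma> n). \<rho> (coset_mult v w)) = \<mu>s n))"

definition rf_model :: "'a::topological_space set \<Rightarrow> ('g::group_add \<Rightarrow> 'a) measure \<Rightarrow> bool" where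
  "rf_model A \<mu> \<longleftrightarrow> (\<exists>\<Gamma> \<mu>s. rf_approx \<Gamma> \<and> model_seq A \<Gamma> \<mu>s \<and>
     (\<forall>F \<epsilon>. finite F \<longrightarrow> F \<subseteq> cont_funs A \<longrightarrow> \<epsilon> > 0 \<longrightarrow>
        (\<lambda>n. real (card {v \<in> quot (\<Gamma> n).
                distr (\<mu>s n) (shift_space A) (Pi_v v) \<in> weak_nbhd A \<mu> F \<epsilon>})
             / real (card (quot (\<Gamma> n)))) \<longlonglongrightarrow> 1))"

definition erf_model :: "'a::topological_space set \<Rightarrow> ('g::group_add \<Rightarrow> 'a) measure \<Rightarrow> bool" where
  "erf_model A \<mu> \<longleftrightarrow> (\<exists>\<Gamma> \<mu>s. rf_approx \<Gamma> \<and> model_seq A \<Gamma> \<mu>s \<and>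
     (\<forall>F \<epsilon>. finite F \<longrightarrow> F \<subseteq> cont_funs A \<longrightarrow> \<epsilon> > 0 \<longrightarrow>
        (\<lambda>n. real (card {v \<in> quot (\<Gamma> n).
                distr (\<mu>s n) (shift_space A) (Pi_v v) \<in> weak_nbhd A \<mu> F \<epsilon>})
             / real (card (quot (\<Gamma> n)))) \<longlonglongrightarrow> 1
      \<and> (\<lambda>n. measure (\<mu>s n) {\<rho> \<in> space (\<mu>s n).
                empirical A (quot (\<Gamma> n)) \<rho> \<in> weak_nbhd A \<mu> F \<epsilon>}) \<longlonglongrightarrow> 1))"

end

theory Submission
  imports Defs
begin

text \<open>A periodic measure \<open>\<nu>\<close> is carried by a finite shift-invariant set \<open>S\<close> of configurations.
  The stabiliser \<open>\<Gamma>\<close> of \<open>S\<close> has finite index and every point of \<open>S\<close> is \<open>\<Gamma>\<close>-periodic, i.e. a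
  configuration on \<open>V = G/\<Gamma>\<close>. Pushing \<open>\<nu>\<close> forward to \<open>A\<^sup>V\<close> gives a measure invariant under right
  multiplication whose view \<open>\<Pi>\<^sub>v\<close> from every vertex \<open>v\<close> is \<open>\<nu>\<close> itself; if \<open>\<nu>\<close> is ergodic, \<open>S\<close> is
  a single orbit and the empirical measure \<open>P\<^sub>\<rho>\<close> of every configuration in the support is \<open>\<nu>\<close>
  as well.

  A finitely generated group is countable, so PA (EPA) provides a single sequence \<open>\<nu>\<^sub>n\<close> of
  periodic (ergodic) measures converging weak* to \<open>\<mu>\<close>. PA groups are residually finite: a
  periodic approximation of a Bernoulli shift still separates \<open>0\<close> from any \<open>g \<noteq> 0\<close>. Intersecting
  the stabilisers of the supports of the \<open>\<nu>\<^sub>n\<close> with finite-index normal subgroups that exclude the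
  elements of \<open>G - {0}\<close> one at a time gives the residually finite approximation \<open>\<Gamma>\<^sub>n\<close>, and the
  push-forwards of the \<open>\<nu>\<^sub>n\<close> form the model.\<close>

section \<open>The shift space\<close>

definition cylinder :: "'g set \<Rightarrow> ('g \<Rightarrow> 'a) \<Rightarrow> ('g \<Rightarrow> 'a) set" where
  "cylinder J \<omega> = {x. \<forall>j\<in>J. x j = \<omega> j}"

lemma open_vimage_coordinate: "open ((\<lambda>x::'g \<Rightarrow> 'a::discrete_topology. x j) -` S)"
proof -
  have "open S" by (rule discrete_topology_class.open_discrete)
  then show ?thesis
    using continuous_on_open_vimage[of UNIV "\<lambda>x::'g \<Rightarrow> 'a. x j", OF open_UNIV]
      continuous_on_product_coordinates[of j]
    by auto
qed

lemma open_cylinder: "finite J \<Longrightarrow> open (cylinder J (\<omega>::'g \<Rightarrow> 'a::discrete_topology))"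
proof -
  assume "finite J"
  have "cylinder J \<omega> = (\<Inter>j\<in>J. (\<lambda>x. x j) -` {\<omega> j})" by (auto simp: cylinder_def)
  moreover have "open (\<Inter>j\<in>J. (\<lambda>x::'g \<Rightarrow> 'a. x j) -` {\<omega> j})"
    by (rule open_INT) (use \<open>finite J\<close> open_vimage_coordinate in auto)
  ultimately show ?thesis by simp
qed

lemma closed_singleton_fun: "closed {\<omega>::'g \<Rightarrow> 'a::discrete_topology}"
proof -
  have "- {\<omega>} = (\<Union>g. (\<lambda>x. x g) -` (- {\<omega> g}))" by auto
  moreover have "open (\<Union>g. (\<lambda>x::'g \<Rightarrow> 'a. x g) -` (- {\<omega> g}))"
    by (rule open_UN) (use open_vimage_coordinate in auto)
  ultimately show ?thesis unfolding closed_def by simp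
qed

lemma continuous_on_finite_dependence:
  fixes f :: "('g \<Rightarrow> 'a::discrete_topology) \<Rightarrow> 'b::topological_space"
  assumes "finite J" and "\<And>x y. \<forall>j\<in>J. x j = y j \<Longrightarrow> f x = f y"
  shows "continuous_on S f"
  unfolding continuous_on_topological
proof (intro ballI allI impI)
  fix x B assume "x \<in> S" "open B" "f x \<in> B"
  show "\<exists>U. open U \<and> x \<in> U \<and> (\<forall>y\<in>S. y \<in> U \<longrightarrow> f y \<in> B)"
  proof (intro exI conjI)
    show "open (cylinder J x)" using open_cylinder assms(1) by blast
    show "x \<in> cylinder J x" by (simp add: cylinder_def)
    have "f y = f x" if "y \<in> cylinder J x" for y
      using that assms(2)[of y x] by (simp add: cylinder_def)
    then show "\<forall>y\<in>S. y \<in> cylinder J x \<longrightarrow> f y \<in> B" using \<open>f x \<in> B\<close> by simp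
  qed
qed

lemma space_shift_space [simp]: "space (shift_space A) = config A"
  by (simp add: shift_space_def space_restrict_space)

lemma sets_shift_space_open: "open U \<Longrightarrow> U \<inter> config A \<in> sets (shift_space A)"
  unfolding shift_space_def sets_restrict_space
  by (rule image_eqI[where x=U]) (auto simp: Int_commute borel_open)

lemma sets_shift_space_closed: "closed U \<Longrightarrow> U \<inter> config A \<in> sets (shift_space A)"
  unfolding shift_space_def sets_restrict_space
  by (rule image_eqI[where x=U]) (auto simp: Int_commute borel_closed)

lemma sets_shift_space_singleton:
  "\<omega> \<in> config A \<Longrightarrow> {\<omega>::'g \<Rightarrow> 'a::discrete_topology} \<in> sets (shift_space A)"
  using sets_shift_space_closed[OF closed_singleton_fun, of \<omega> A] by (simp add: Int_absorb2)

lemma sets_shift_space_finite: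
  "finite S \<Longrightarrow> S \<subseteq> config A \<Longrightarrow> (S::('g \<Rightarrow> 'a::discrete_topology) set) \<in> sets (shift_space A)"
proof (induction S rule: finite_induct)
  case (insert x F)
  then have "{x} \<union> F \<in> sets (shift_space A)"
    by (intro sets.Un sets_shift_space_singleton) auto
  then show ?case by simp
qed simp

lemma borel_measurable_continuous_on_config:
  "continuous_on (config A) f \<Longrightarrow> f \<in> borel_measurable (shift_space A)"
  unfolding shift_space_def by (rule borel_measurable_continuous_on_restrict)

lemma measurable_shift_spaceI:
  "continuous_on (config A) T \<Longrightarrow> T ` config A \<subseteq> config B \<Longrightarrow>
     T \<in> measurable (shift_space A) (shift_space B)"
  unfolding shift_space_def
  by (rule measurable_restrict_space2)
     (auto intro: borel_measurable_continuous_on_restrict simp: space_restrict_space)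

lemma continuous_on_shift_act:
  "continuous_on S (shift_act h :: ('g::group_add \<Rightarrow> 'a::topological_space) \<Rightarrow> _)"
  unfolding shift_act_def
  by (intro continuous_on_coordinatewise_then_product
        continuous_on_subset[OF continuous_on_product_coordinates]) auto

lemma shift_act_in_config: "\<omega> \<in> config A \<Longrightarrow> shift_act h \<omega> \<in> config A"
  by (simp add: config_def shift_act_def)

lemma measurable_shift_act:
  "shift_act h \<in> measurable (shift_space A) (shift_space (A::'a::topological_space set))"
  by (rule measurable_shift_spaceI[OF continuous_on_shift_act]) (auto intro: shift_act_in_config)

lemma shift_act_shift_act: "shift_act a (shift_act b \<omega>) = shift_act (a + b) \<omega>"
  by (simp add: shift_act_def add.assoc)

lemma shift_act_0 [simp]: "shift_act 0 \<omega> = \<omega>"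
  by (simp add: shift_act_def)

lemma shift_act_minus_cancel [simp]:
  "shift_act h (shift_act (- h) \<omega>) = \<omega>" "shift_act (- h) (shift_act h \<omega>) = \<omega>"
  by (simp_all add: shift_act_shift_act)

section \<open>Cosets of normal subgroups\<close>

lemma mem_coset_iff: "x \<in> coset y H \<longleftrightarrow> -y + x \<in> (H::'g::group_add set)"
proof
  assume "x \<in> coset y H"
  then obtain h where "h \<in> H" "x = y + h" by (auto simp: coset_def)
  then show "-y + x \<in> H" by (simp add: add.assoc)
next
  assume "-y + x \<in> H"
  moreover have "x = y + (-y + x)" by (simp add: add.assoc)
  ultimately show "x \<in> coset y H" unfolding coset_def by blast
qed

lemma normal_subgroupD:
  assumes "normal_subgroup H"
  shows "0 \<in> H" "x \<in> H \<Longrightarrow> y \<in> H \<Longrightarrow> x + y \<in> H" "x \<in> H \<Longrightarrow> -x \<in> H"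
    "x \<in> H \<Longrightarrow> g + x + - g \<in> H"
  using assms unfolding normal_subgroup_def by (auto simp flip: diff_conv_add_uminus)

lemma normal_subgroup_UNIV: "normal_subgroup (UNIV :: 'g::group_add set)"
  by (simp add: normal_subgroup_def)

lemma normal_subgroup_Int:
  assumes "normal_subgroup H" "normal_subgroup K"
  shows "normal_subgroup (H \<inter> K)"
  using assms unfolding normal_subgroup_def by (simp add: Ball_def)

lemma coset_self: "normal_subgroup H \<Longrightarrow> y \<in> coset y H"
  by (simp add: mem_coset_iff normal_subgroupD)

lemma coset_eq_iff:
  assumes H: "normal_subgroup H"
  shows "coset y H = coset z H \<longleftrightarrow> -y + z \<in> H"
proof
  assume "coset y H = coset z H"
  then have "z \<in> coset y H" using coset_self[OF H, of z] by simp
  then show "-y + z \<in> H" by (simp add: mem_coset_iff)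
next
  assume a: "-y + z \<in> H"
  show "coset y H = coset z H"
  proof (rule set_eqI)
    fix x
    have "-y + x = (-y + z) + (-z + x)" "-z + x = - (-y + z) + (-y + x)"
      by (simp_all add: add.assoc minus_add)
    then show "x \<in> coset y H \<longleftrightarrow> x \<in> coset z H"
      unfolding mem_coset_iff using a normal_subgroupD[OF H] by metis
  qed
qed

lemma coset_Int: "coset v (H \<inter> K) = coset v H \<inter> coset v K"
  by (auto simp: mem_coset_iff)

lemma quot_nonempty: "quot H \<noteq> {}"
  unfolding quot_def by simp

lemma quot_UNIV: "quot (UNIV :: 'g::group_add set) = {UNIV}"
  unfolding quot_def by (auto simp: mem_coset_iff)

lemma finite_quot_Int:
  assumes "finite (quot H)" "finite (quot K)"
  shows "finite (quot (H \<inter> K))"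
proof -
  have "quot (H \<inter> K) \<subseteq> (\<lambda>(C, D). C \<inter> D) ` (quot H \<times> quot K)"
    unfolding quot_def coset_Int by auto
  then show ?thesis using assms by (auto intro: finite_subset)
qed

text \<open>An arbitrary representative of each coset, chosen by Hilbert choice; configurations on
  \<open>G/H\<close> are read off at these representatives.\<close>

definition rep :: "'g set \<Rightarrow> 'g" where "rep C = (SOME x. x \<in> C)"

lemma rep_coset: "normal_subgroup H \<Longrightarrow> -y + rep (coset y H) \<in> H"
  using someI[of "\<lambda>x. x \<in> coset y H", OF coset_self] by (simp add: rep_def mem_coset_iff)

lemma coset_rep:
  assumes H: "normal_subgroup H" and "v \<in> quot H"
  shows "coset (rep v) H = v"
proof -
  obtain y where y: "v = coset y H" using \<open>v \<in> quot H\<close> unfolding quot_def by blast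
  show ?thesis unfolding y using coset_eq_iff[OF H] rep_coset[OF H, of y] by blast
qed

lemma sigma_coset: "sigma g (coset y H) = coset (g + y) (H::'g::group_add set)"
  unfolding sigma_def coset_def by (auto simp: image_image add.assoc)

lemma sigma_in_quot: "v \<in> quot H \<Longrightarrow> sigma g v \<in> quot H"
  unfolding quot_def by (auto simp: sigma_coset)

lemma coset_mult_coset:
  assumes H: "normal_subgroup H"
  shows "coset_mult (coset a H) (coset b H) = coset (a + b) H"
proof (rule set_eqI)
  fix z
  show "z \<in> coset_mult (coset a H) (coset b H) \<longleftrightarrow> z \<in> coset (a + b) H"
  proof
    assume "z \<in> coset_mult (coset a H) (coset b H)"
    then obtain x y where xy: "x \<in> H" "y \<in> H" "z = (a + x) + (b + y)"
      unfolding coset_mult_def coset_def by blast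
    have "-(a + b) + z = (-b + x + - (-b)) + y"
      using xy by (simp add: add.assoc minus_add diff_conv_add_uminus del: add_uminus_conv_diff)
    also have "\<dots> \<in> H" using normal_subgroupD(2,4)[OF H] xy(1,2) by blast
    finally show "z \<in> coset (a + b) H" by (simp add: mem_coset_iff)
  next
    assume "z \<in> coset (a + b) H"
    then have "b + (-(a+b) + z) \<in> coset b H" by (simp add: mem_coset_iff)
    moreover have "z = a + (b + (-(a+b) + z))"
      by (simp add: add.assoc minus_add diff_conv_add_uminus del: add_uminus_conv_diff)
    ultimately show "z \<in> coset_mult (coset a H) (coset b H)"
      unfolding coset_mult_def using coset_self[OF H, of a] by blast
  qed
qed

lemma coset_mult_eq_coset_rep:
  assumes H: "normal_subgroup H" and "v \<in> quot H" "w \<in> quot H"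
  shows "coset_mult v w = coset (rep v + rep w) H"
  using coset_mult_coset[OF H, of "rep v" "rep w"] coset_rep[OF H] assms(2,3) by simp

lemma coset_mult_in_quot:
  assumes "normal_subgroup H" "v \<in> quot H" "w \<in> quot H"
  shows "coset_mult v w \<in> quot H"
  by (simp add: coset_mult_eq_coset_rep[OF assms] quot_def)

lemma inj_on_coset_rep_add:
  assumes H: "normal_subgroup H"
  shows "inj_on (\<lambda>v. coset (rep v + h) H) (quot H)"
proof (rule inj_onI)
  fix u v assume u: "u \<in> quot H" and v: "v \<in> quot H"
    and "coset (rep u + h) H = coset (rep v + h) H"
  then have "-h + (-rep u + rep v) + h \<in> H"
    using coset_eq_iff[OF H]
    by (simp add: minus_add add.assoc diff_conv_add_uminus del: add_uminus_conv_diff)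
  then have "h + (-h + (-rep u + rep v) + h) + - h \<in> H" by (rule normal_subgroupD(4)[OF H])
  then have "-rep u + rep v \<in> H"
    by (simp add: add.assoc diff_conv_add_uminus del: add_uminus_conv_diff)
  then show "u = v" using coset_eq_iff[OF H] coset_rep[OF H] u v by metis
qed

section \<open>Configurations fixed by a subgroup\<close>

definition fixed_by :: "'g::group_add set \<Rightarrow> ('g \<Rightarrow> 'a) \<Rightarrow> bool" where
  "fixed_by H \<omega> \<longleftrightarrow> (\<forall>h\<in>H. shift_act h \<omega> = \<omega>)"

lemma fixed_by_subset: "K \<subseteq> H \<Longrightarrow> fixed_by H \<omega> \<Longrightarrow> fixed_by K \<omega>"
  unfolding fixed_by_def by auto

lemma shift_act_rep_coset:
  assumes H: "normal_subgroup H" and \<omega>: "fixed_by H \<omega>"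
  shows "shift_act (rep (coset y H)) \<omega> = shift_act y \<omega>"
proof -
  have "shift_act (rep (coset y H)) \<omega> = shift_act y (shift_act (-y + rep (coset y H)) \<omega>)"
    by (simp add: shift_act_shift_act add.assoc)
  also have "\<dots> = shift_act y \<omega>" using \<omega> rep_coset[OF H, of y] by (simp add: fixed_by_def)
  finally show ?thesis .
qed

lemma fixed_by_rep_coset:
  assumes "normal_subgroup H" "fixed_by H \<omega>"
  shows "\<omega> (rep (coset y H)) = \<omega> y"
  using fun_cong[OF shift_act_rep_coset[OF assms, of y], of 0] by (simp add: shift_act_def)

definition stabilizer :: "('g::group_add \<Rightarrow> 'a) set \<Rightarrow> 'g set" where
  "stabilizer X = {h. \<forall>\<omega>\<in>X. shift_act h \<omega> = \<omega>}"

lemma fixed_by_stabilizer: "\<omega> \<in> X \<Longrightarrow> fixed_by (stabilizer X) \<omega>"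
  unfolding stabilizer_def fixed_by_def by auto

lemma normal_subgroup_stabilizer:
  assumes inv: "\<And>h \<omega>. \<omega> \<in> X \<Longrightarrow> shift_act h \<omega> \<in> X"
  shows "normal_subgroup (stabilizer X)"
  unfolding normal_subgroup_def stabilizer_def
proof (intro conjI ballI allI; clarsimp)
  fix x \<omega> assume "\<forall>\<omega>\<in>X. shift_act x \<omega> = \<omega>" "\<omega> \<in> X"
  then show "shift_act (- x) \<omega> = \<omega>" by (metis shift_act_minus_cancel(2))
next
  fix x y \<omega> assume "\<forall>\<omega>\<in>X. shift_act x \<omega> = \<omega>" "\<forall>\<omega>\<in>X. shift_act y \<omega> = \<omega>" "\<omega> \<in> X"
  then show "shift_act (x + y) \<omega> = \<omega>" by (metis shift_act_shift_act)
next
  fix g x \<omega> assume x: "\<forall>\<omega>\<in>X. shift_act x \<omega> = \<omega>" and "\<omega> \<in> X"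
  then have "shift_act x (shift_act (-g) \<omega>) = shift_act (-g) \<omega>" using inv by blast
  then show "shift_act (g + x - g) \<omega> = \<omega>"
    by (metis diff_conv_add_uminus shift_act_shift_act shift_act_minus_cancel(1))
qed

text \<open>The coset of \<open>v\<close> is determined by the map \<open>\<omega> \<mapsto> shift_act v \<omega>\<close> on the finite set \<open>X\<close>.\<close>

lemma finite_quot_stabilizer:
  fixes X :: "('g::group_add \<Rightarrow> 'a) set"
  assumes inv: "\<And>h \<omega>. \<omega> \<in> X \<Longrightarrow> shift_act h \<omega> \<in> X" and fin: "finite X"
  shows "finite (quot (stabilizer X))"
proof -
  define Z where "Z p = {x::'g. \<forall>\<omega>\<in>X. shift_act x \<omega> = p \<omega>}" for p
  have "coset v (stabilizer X) = Z (\<lambda>\<omega>\<in>X. shift_act v \<omega>)" for v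
  proof (rule set_eqI)
    fix x
    have "shift_act (-v + x) \<omega> = \<omega> \<longleftrightarrow> shift_act x \<omega> = shift_act v \<omega>" for \<omega>
    proof
      assume "shift_act (-v + x) \<omega> = \<omega>"
      then have "shift_act v (shift_act (-v + x) \<omega>) = shift_act v \<omega>" by simp
      then show "shift_act x \<omega> = shift_act v \<omega>" by (simp add: shift_act_shift_act add.assoc[symmetric])
    next
      assume "shift_act x \<omega> = shift_act v \<omega>"
      then have "shift_act (-v) (shift_act x \<omega>) = shift_act (-v) (shift_act v \<omega>)" by simp
      then show "shift_act (-v + x) \<omega> = \<omega>" by (simp add: shift_act_shift_act)
    qed
    then have "-v + x \<in> stabilizer X \<longleftrightarrow> (\<forall>\<omega>\<in>X. shift_act x \<omega> = shift_act v \<omega>)"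
      unfolding stabilizer_def by auto
    then show "x \<in> coset v (stabilizer X) \<longleftrightarrow> x \<in> Z (\<lambda>\<omega>\<in>X. shift_act v \<omega>)"
      by (simp add: mem_coset_iff Z_def)
  qed
  then have "quot (stabilizer X) \<subseteq> Z ` (X \<rightarrow>\<^sub>E X)"
    unfolding quot_def using inv by (auto intro!: imageI)
  moreover have "finite (Z ` (X \<rightarrow>\<^sub>E X))" using fin by (intro finite_imageI finite_PiE) auto
  ultimately show ?thesis by (rule finite_subset)
qed

section \<open>Invariant, periodic and ergodic measures\<close>

lemma prob_onD:
  assumes "prob_on A \<nu>"
  shows "prob_space \<nu>" "sets \<nu> = sets (shift_space A)" "space \<nu> = config A"
  using assms sets_eq_imp_space_eq[of \<nu> "shift_space A"] unfolding prob_on_def by auto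

lemma invariant_measureD:
  assumes "invariant_measure A \<nu>"
  shows "prob_on A \<nu>" "distr \<nu> (shift_space A) (shift_act h) = \<nu>"
  using assms unfolding invariant_measure_def by auto

lemma prob_on_measurable:
  "prob_on A \<nu> \<Longrightarrow> f \<in> measurable (shift_space A) N \<Longrightarrow> f \<in> measurable \<nu> N"
  using measurable_cong_sets[OF prob_onD(2) refl] by metis

lemma integral_shift_act:
  fixes f :: "('g::group_add \<Rightarrow> 'a::topological_space) \<Rightarrow> real"
  assumes I: "invariant_measure A \<nu>" and f: "f \<in> borel_measurable (shift_space A)"
  shows "(\<integral>\<omega>. f (shift_act h \<omega>) \<partial>\<nu>) = (\<integral>\<omega>. f \<omega> \<partial>\<nu>)"
proof -
  have "(\<integral>\<omega>. f (shift_act h \<omega>) \<partial>\<nu>) = integral\<^sup>L (distr \<nu> (shift_space A) (shift_act h)) f"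
    by (rule integral_distr[symmetric])
       (use prob_on_measurable[OF invariant_measureD(1)[OF I] measurable_shift_act] f in auto)
  then show ?thesis using invariant_measureD(2)[OF I] by simp
qed

lemma measure_singleton_shift_act:
  fixes \<nu> :: "('g::group_add \<Rightarrow> 'a::discrete_topology) measure"
  assumes I: "invariant_measure A \<nu>" and \<omega>: "\<omega> \<in> config A"
  shows "measure \<nu> {shift_act h \<omega>} = measure \<nu> {\<omega>}"
proof -
  have P: "prob_on A \<nu>" by (rule invariant_measureD(1)[OF I])
  have "shift_act (-h) -` {\<omega>} \<inter> space \<nu> = {shift_act h \<omega>}"
    using prob_onD(3)[OF P] shift_act_in_config[OF \<omega>] by force
  moreover have "measure \<nu> {\<omega>} = measure (distr \<nu> (shift_space A) (shift_act (-h))) {\<omega>}"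
    using invariant_measureD(2)[OF I] by simp
  ultimately show ?thesis
    using measure_distr[OF prob_on_measurable[OF P measurable_shift_act]
        sets_shift_space_singleton[OF \<omega>]] by simp
qed

lemma integral_finite_support:
  fixes \<nu> :: "('g \<Rightarrow> 'a::discrete_topology) measure"
  assumes P: "prob_on A \<nu>" and S: "finite S" "S \<subseteq> config A" "measure \<nu> S = 1"
    and f: "f \<in> borel_measurable (shift_space A)"
  shows "(\<integral>\<omega>. f \<omega> \<partial>\<nu>) = (\<Sum>\<omega>\<in>S. f \<omega> * measure \<nu> {\<omega>})"
proof -
  interpret prob_space \<nu> using prob_onD(1)[OF P] .
  have sets: "sets \<nu> = sets (shift_space A)" by (rule prob_onD(2)[OF P])
  have sing: "{\<omega>} \<in> sets \<nu>" if "\<omega> \<in> S" for \<omega>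
    using sets_shift_space_singleton[of \<omega> A] S(2) that sets by auto
  have ind: "integrable \<nu> (\<lambda>x. f \<omega> * indicator {\<omega>} x)" if "\<omega> \<in> S" for \<omega>
    using sing[OF that] by (simp add: less_top[symmetric])
  have "AE x in \<nu>. x \<in> S"
    using AE_in_set_eq_1 sets_shift_space_finite[OF S(1,2)] S(3) sets by simp
  then have "AE x in \<nu>. f x = (\<Sum>\<omega>\<in>S. f \<omega> * indicator {\<omega>} x)"
    by eventually_elim (simp add: indicator_def S(1) sum.delta' if_distrib cong: if_cong)
  then have "(\<integral>x. f x \<partial>\<nu>) = (\<integral>x. (\<Sum>\<omega>\<in>S. f \<omega> * indicator {\<omega>} x) \<partial>\<nu>)"
    using sing prob_on_measurable[OF P f] by (intro integral_cong_AE) auto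
  also have "\<dots> = (\<Sum>\<omega>\<in>S. \<integral>x. f \<omega> * indicator {\<omega>} x \<partial>\<nu>)"
    by (rule Bochner_Integration.integral_sum[where I=S and f="\<lambda>\<omega> x. f \<omega> * indicator {\<omega>} x"])
       (rule ind)
  also have "\<dots> = (\<Sum>\<omega>\<in>S. f \<omega> * measure \<nu> {\<omega>})"
    using S(2) prob_onD(3)[OF P] by (intro sum.cong) (auto simp: Int_absorb2)
  finally show ?thesis .
qed

text \<open>The atoms of positive mass inside a finite set of full measure are permuted by the shifts.\<close>

lemma periodic_measure_invariant_support:
  fixes \<nu> :: "('g::group_add \<Rightarrow> 'a::discrete_topology) measure"
  assumes "periodic_measure A \<nu>"
  obtains S where "finite S" "S \<subseteq> config A" "\<And>h \<omega>. \<omega> \<in> S \<Longrightarrow> shift_act h \<omega> \<in> S"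
    "measure \<nu> S = 1" "\<And>\<omega>. \<omega> \<in> S \<Longrightarrow> measure \<nu> {\<omega>} > 0"
proof -
  have I: "invariant_measure A \<nu>" using assms by (simp add: periodic_measure_def)
  have P: "prob_on A \<nu>" by (rule invariant_measureD(1)[OF I])
  interpret prob_space \<nu> using prob_onD(1)[OF P] .
  obtain T where T: "finite T" "T \<in> sets \<nu>" "measure \<nu> T = 1"
    using assms unfolding periodic_measure_def by blast
  have T_config: "T \<subseteq> config A" using sets.sets_into_space[OF T(2)] prob_onD(3)[OF P] by simp
  have sing: "{\<omega>} \<in> sets \<nu>" if "\<omega> \<in> config A" for \<omega>
    using sets_shift_space_singleton[OF that] prob_onD(2)[OF P] by simp
  have null_outside: "measure \<nu> {x} = 0" if "x \<in> config A" "x \<notin> T" for x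
  proof -
    have "measure \<nu> {x} + measure \<nu> T = measure \<nu> ({x} \<union> T)"
      using that by (intro finite_measure_Union[symmetric] sing T(2)) auto
    moreover have "measure \<nu> ({x} \<union> T) \<le> 1" by (rule prob_le_1)
    ultimately show ?thesis using T(3) measure_nonneg[of \<nu> "{x}"] by linarith
  qed
  define S where "S = {\<omega>\<in>T. measure \<nu> {\<omega>} > 0}"
  have "finite S" "S \<subseteq> T" using T(1) unfolding S_def by auto
  have "measure \<nu> S = measure \<nu> T"
  proof -
    have "measure \<nu> T = (\<Sum>\<omega>\<in>T. measure \<nu> {\<omega>})"
      using T(1) T_config sing by (intro measure_eq_sum_singleton) auto
    also have "\<dots> = (\<Sum>\<omega>\<in>S. measure \<nu> {\<omega>})"
      using T(1) by (intro sum.mono_neutral_right) (auto simp: S_def less_le)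
    also have "\<dots> = measure \<nu> S"
      using \<open>finite S\<close> \<open>S \<subseteq> T\<close> T_config sing by (intro measure_eq_sum_singleton[symmetric]) auto
    finally show ?thesis ..
  qed
  moreover have "shift_act h \<omega> \<in> S" if "\<omega> \<in> S" for h \<omega>
  proof -
    have \<omega>: "\<omega> \<in> config A" using that \<open>S \<subseteq> T\<close> T_config by auto
    then have "measure \<nu> {shift_act h \<omega>} > 0"
      using measure_singleton_shift_act[OF I] that by (simp add: S_def)
    then show ?thesis
      using null_outside[OF shift_act_in_config[OF \<omega>], of h] by (auto simp: S_def)
  qed
  moreover have "S \<subseteq> config A" "\<And>\<omega>. \<omega> \<in> S \<Longrightarrow> measure \<nu> {\<omega>} > 0"
    using \<open>S \<subseteq> T\<close> T_config by (auto simp: S_def)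
  ultimately show ?thesis using that \<open>finite S\<close> T(3) by simp
qed

lemma ergodic_measure_orbit:
  fixes \<nu> :: "('g::group_add \<Rightarrow> 'a::discrete_topology) measure"
  assumes E: "ergodic_measure A \<nu>" and x: "x \<in> config A" "measure \<nu> {x} > 0"
    and fin: "finite (range (\<lambda>h. shift_act h x))"
  shows "measure \<nu> (range (\<lambda>h. shift_act h x)) = 1"
proof -
  define Orb where "Orb = range (\<lambda>h. shift_act h x)"
  have P: "prob_on A \<nu>" using E by (simp add: ergodic_measure_def invariant_measure_def)
  interpret prob_space \<nu> using prob_onD(1)[OF P] .
  have "Orb \<in> sets \<nu>"
    using sets_shift_space_finite[OF fin] shift_act_in_config[OF x(1)] prob_onD(2)[OF P]
    by (auto simp: Orb_def)
  moreover have "shift_act h ` Orb = Orb" for h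
  proof
    show "shift_act h ` Orb \<subseteq> Orb" by (auto simp: Orb_def shift_act_shift_act)
    have "shift_act k x = shift_act h (shift_act (-h + k) x)" for k
      by (simp add: shift_act_shift_act add.assoc[symmetric])
    then show "Orb \<subseteq> shift_act h ` Orb" unfolding Orb_def by blast
  qed
  ultimately have "measure \<nu> Orb = 0 \<or> measure \<nu> Orb = 1"
    using E unfolding ergodic_measure_def by blast
  moreover have "measure \<nu> {x} \<le> measure \<nu> Orb"
    using \<open>Orb \<in> sets \<nu>\<close> by (intro finite_measure_mono) (auto simp: Orb_def intro: range_eqI[of _ _ 0])
  ultimately show ?thesis using x(2) unfolding Orb_def by auto
qed

lemma weak_nbhd_integral_cong:
  assumes "\<nu> \<in> weak_nbhd A \<mu> F \<epsilon>" "prob_on A \<nu>'"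
    and "\<And>f. f \<in> F \<Longrightarrow> (\<integral>\<omega>. f \<omega> \<partial>\<nu>') = (\<integral>\<omega>. f \<omega> \<partial>\<nu>)"
  shows "\<nu>' \<in> weak_nbhd A \<mu> F \<epsilon>"
  using assms by (simp add: weak_nbhd_def)

section \<open>The finite model of a periodic measure\<close>

text \<open>A configuration fixed by \<open>H\<close> is a configuration on \<open>G/H\<close>.\<close>

definition quot_config :: "'g::group_add set \<Rightarrow> ('g \<Rightarrow> 'a) \<Rightarrow> ('g set \<Rightarrow> 'a)" where
  "quot_config H \<omega> = (\<lambda>v\<in>quot H. \<omega> (rep v))"

lemma quot_config_in_PiE: "\<omega> \<in> config A \<Longrightarrow> quot_config H \<omega> \<in> quot H \<rightarrow>\<^sub>E A"
  by (auto simp: quot_config_def config_def)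

lemma measurable_quot_config:
  fixes A :: "'a::discrete_topology set" and H :: "'g::group_add set"
  assumes "finite (quot H)" "finite A"
  shows "(quot_config H :: ('g \<Rightarrow> 'a) \<Rightarrow> _) \<in> measurable (shift_space A) (fin_config_space (quot H) A)"
proof -
  have fin: "finite (quot H \<rightarrow>\<^sub>E A)" using assms by (intro finite_PiE) auto
  show ?thesis unfolding fin_config_space_def
  proof (subst measurable_count_space_eq2[OF fin], intro conjI ballI)
    show "quot_config H \<in> space (shift_space A) \<rightarrow> quot H \<rightarrow>\<^sub>E A"
      using quot_config_in_PiE by (metis Pi_I space_shift_space)
    fix a assume a: "a \<in> quot H \<rightarrow>\<^sub>E A"
    have eq: "quot_config H -` {a} \<inter> space (shift_space A)
        = (\<Inter>v\<in>quot H. (\<lambda>x::'g \<Rightarrow> 'a. x (rep v)) -` {a v}) \<inter> config A"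
      using a by (auto simp: quot_config_def fun_eq_iff PiE_def extensional_def)
    have "open (\<Inter>v\<in>quot H. (\<lambda>x::'g \<Rightarrow> 'a. x (rep v)) -` {a v})"
      using assms(1) open_vimage_coordinate by (intro open_INT) auto
    then show "quot_config H -` {a} \<inter> space (shift_space A) \<in> sets (shift_space A)"
      unfolding eq by (rule sets_shift_space_open)
  qed
qed

lemma Pi_v_quot_config:
  assumes H: "normal_subgroup H" and v: "v \<in> quot H" and \<omega>: "fixed_by H \<omega>"
  shows "Pi_v v (quot_config H \<omega>) = shift_act (rep v) \<omega>"
proof
  fix g
  have "sigma g v = coset (g + rep v) H"
    using sigma_coset[of g "rep v" H] coset_rep[OF H v] by simp
  then have "Pi_v v (quot_config H \<omega>) g = \<omega> (rep (coset (g + rep v) H))"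
    using sigma_in_quot[OF v] by (simp add: Pi_v_def quot_config_def)
  also have "\<dots> = \<omega> (g + rep v)" by (rule fixed_by_rep_coset[OF H \<omega>])
  finally show "Pi_v v (quot_config H \<omega>) g = shift_act (rep v) \<omega> g" by (simp add: shift_act_def)
qed

lemma measurable_Pi_v:
  assumes "v \<in> quot H" "sets M = sets (fin_config_space (quot H) A)"
  shows "Pi_v v \<in> measurable M (shift_space A)"
proof -
  have "Pi_v v \<rho> \<in> config A" if "\<rho> \<in> quot H \<rightarrow>\<^sub>E A" for \<rho>
    using that sigma_in_quot[OF assms(1)] by (auto simp: Pi_v_def config_def PiE_iff)
  then have "Pi_v v \<in> measurable (fin_config_space (quot H) A) (shift_space A)"
    by (auto simp: fin_config_space_def)
  then show ?thesis using measurable_cong_sets[OF assms(2) refl] by metis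
qed

locale periodic_model =
  fixes H :: "'g::group_add set" and A :: "'a::discrete_topology set"
    and \<nu> :: "('g \<Rightarrow> 'a) measure" and S :: "('g \<Rightarrow> 'a) set"
  assumes normal: "normal_subgroup H" and finite_quot: "finite (quot H)"
    and finite_alphabet: "finite A" and invariant: "invariant_measure A \<nu>"
    and finite_support: "finite S" and support_config: "S \<subseteq> config A"
    and support_invariant: "\<And>h \<omega>. \<omega> \<in> S \<Longrightarrow> shift_act h \<omega> \<in> S"
    and measure_support: "measure \<nu> S = 1"
    and support_atoms: "\<And>\<omega>. \<omega> \<in> S \<Longrightarrow> measure \<nu> {\<omega>} > 0"
    and support_fixed: "\<And>\<omega>. \<omega> \<in> S \<Longrightarrow> fixed_by H \<omega>"
begin

abbreviation model :: "('g set \<Rightarrow> 'a) measure" where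
  "model \<equiv> distr \<nu> (fin_config_space (quot H) A) (quot_config H)"

lemma prob_on: "prob_on A \<nu>"
  by (rule invariant_measureD(1)[OF invariant])

lemma measurable_quot_config_\<nu>: "quot_config H \<in> measurable \<nu> (fin_config_space (quot H) A)"
  using prob_on_measurable[OF prob_on measurable_quot_config[OF finite_quot finite_alphabet]] .

lemma prob_space_model: "prob_space model"
  using prob_space.prob_space_distr[OF prob_onD(1)[OF prob_on] measurable_quot_config_\<nu>] .

lemma AE_support: "AE \<omega> in \<nu>. \<omega> \<in> S"
proof -
  interpret prob_space \<nu> using prob_onD(1)[OF prob_on] .
  show ?thesis
    using AE_in_set_eq_1 sets_shift_space_finite[OF finite_support support_config]
      prob_onD(2)[OF prob_on] measure_support
    by simp
qed

lemma measure_model_eq_1: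
  assumes "\<And>\<omega>. \<omega> \<in> S \<Longrightarrow> Q (quot_config H \<omega>)"
  shows "measure model {\<rho> \<in> space model. Q \<rho>} = 1"
proof -
  interpret prob_space model by (rule prob_space_model)
  have sets: "{\<rho> \<in> space model. Q \<rho>} \<in> sets model" by (simp add: fin_config_space_def)
  have "AE \<omega> in \<nu>. Q (quot_config H \<omega>)"
    using AE_support by eventually_elim (rule assms)
  then have "AE \<rho> in model. Q \<rho>"
    by (subst AE_distr_iff[OF measurable_quot_config_\<nu>]) (use sets in auto)
  then show ?thesis using prob_Collect_eq_1[OF sets] by simp
qed

lemma integral_Pi_v_model:
  fixes f :: "('g \<Rightarrow> 'a) \<Rightarrow> real"
  assumes v: "v \<in> quot H" and f: "f \<in> borel_measurable (shift_space A)"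
  shows "integral\<^sup>L (distr model (shift_space A) (Pi_v v)) f = integral\<^sup>L \<nu> f"
proof -
  have f_Pi_v: "(\<lambda>\<rho>. f (Pi_v v \<rho>)) \<in> borel_measurable (fin_config_space (quot H) A)"
    unfolding fin_config_space_def by simp
  have "integral\<^sup>L (distr model (shift_space A) (Pi_v v)) f = (\<integral>\<rho>. f (Pi_v v \<rho>) \<partial>model)"
    by (rule integral_distr[OF measurable_Pi_v[OF v] f]) simp
  also have "\<dots> = (\<integral>\<omega>. f (Pi_v v (quot_config H \<omega>)) \<partial>\<nu>)"
    by (rule integral_distr[OF measurable_quot_config_\<nu> f_Pi_v])
  also have "\<dots> = (\<integral>\<omega>. f (shift_act (rep v) \<omega>) \<partial>\<nu>)"
  proof (rule integral_cong_AE)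
    show "(\<lambda>\<omega>. f (Pi_v v (quot_config H \<omega>))) \<in> borel_measurable \<nu>"
      using measurable_comp[OF measurable_quot_config_\<nu> f_Pi_v] by (simp add: comp_def)
    show "(\<lambda>\<omega>. f (shift_act (rep v) \<omega>)) \<in> borel_measurable \<nu>"
      using prob_on_measurable[OF prob_on measurable_comp[OF measurable_shift_act f]]
      by (simp add: comp_def)
    show "AE \<omega> in \<nu>. f (Pi_v v (quot_config H \<omega>)) = f (shift_act (rep v) \<omega>)"
      using AE_support by eventually_elim (simp add: Pi_v_quot_config[OF normal v support_fixed])
  qed
  also have "\<dots> = integral\<^sup>L \<nu> f" by (rule integral_shift_act[OF invariant f])
  finally show ?thesis .
qed

lemma Pi_v_model_in_weak_nbhd:
  assumes "\<nu> \<in> weak_nbhd A \<mu> F \<epsilon>" "F \<subseteq> cont_funs A" "v \<in> quot H"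
  shows "distr model (shift_space A) (Pi_v v) \<in> weak_nbhd A \<mu> F \<epsilon>"
proof (rule weak_nbhd_integral_cong[OF assms(1)])
  show "prob_on A (distr model (shift_space A) (Pi_v v))"
    using prob_space.prob_space_distr[OF prob_space_model measurable_Pi_v[OF assms(3)]]
    by (simp add: prob_on_def)
  show "integral\<^sup>L (distr model (shift_space A) (Pi_v v)) f = integral\<^sup>L \<nu> f" if "f \<in> F" for f
    using that assms(2,3)
    by (auto simp: cont_funs_def intro!: integral_Pi_v_model borel_measurable_continuous_on_config)
qed

text \<open>Right multiplication by \<open>w\<close> on \<open>G/H\<close> corresponds to the shift by \<open>rep w\<close>, which preserves \<open>\<nu>\<close>.\<close>

lemma model_right_invariant:
  assumes w: "w \<in> quot H"
  shows "distr model model (\<lambda>\<rho>. \<lambda>v\<in>quot H. \<rho> (coset_mult v w)) = model"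
proof -
  define R where "R = (\<lambda>\<rho>::'g set \<Rightarrow> 'a. \<lambda>v\<in>quot H. \<rho> (coset_mult v w))"
  have R_measurable: "R \<in> measurable (fin_config_space (quot H) A) model"
    using coset_mult_in_quot[OF normal _ w]
    by (auto simp: R_def fin_config_space_def PiE_iff)
  have quot_config_measurable: "quot_config H \<in> measurable (shift_space A) model"
    using measurable_quot_config[OF finite_quot finite_alphabet]
      measurable_cong_sets[OF refl sets_distr] by metis
  have shift_measurable: "shift_act (rep w) \<in> measurable \<nu> (shift_space A)"
    by (rule prob_on_measurable[OF prob_on measurable_shift_act])
  have "R (quot_config H \<omega>) = quot_config H (shift_act (rep w) \<omega>)" if "\<omega> \<in> S" for \<omega>
  proof
    fix v
    show "R (quot_config H \<omega>) v = quot_config H (shift_act (rep w) \<omega>) v"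
    proof (cases "v \<in> quot H")
      case True
      have "R (quot_config H \<omega>) v = \<omega> (rep (coset (rep v + rep w) H))"
        using True coset_mult_in_quot[OF normal True w]
        by (simp add: R_def quot_config_def coset_mult_eq_coset_rep[OF normal True w])
      also have "\<dots> = \<omega> (rep v + rep w)"
        by (rule fixed_by_rep_coset[OF normal support_fixed[OF that]])
      finally show ?thesis using True by (simp add: quot_config_def shift_act_def)
    qed (simp add: R_def quot_config_def)
  qed
  then have AE: "AE \<omega> in \<nu>. (R \<circ> quot_config H) \<omega> = (quot_config H \<circ> shift_act (rep w)) \<omega>"
    using AE_support by (auto elim!: AE_mp)
  have "distr model model R = distr \<nu> model (R \<circ> quot_config H)"
    by (rule distr_distr[OF R_measurable measurable_quot_config_\<nu>])
  also have "\<dots> = distr \<nu> model (quot_config H \<circ> shift_act (rep w))"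
    by (rule distr_cong_AE[OF refl refl AE])
       (use R_measurable measurable_quot_config_\<nu> shift_measurable quot_config_measurable
         in \<open>auto intro: measurable_comp simp: measurable_cong_sets[OF refl sets_distr]\<close>)
  also have "\<dots> = distr (distr \<nu> (shift_space A) (shift_act (rep w))) model (quot_config H)"
    by (rule distr_distr[OF quot_config_measurable shift_measurable, symmetric])
  also have "\<dots> = model"
    using invariant_measureD(2)[OF invariant] by (auto intro: distr_cong)
  finally show ?thesis unfolding R_def .
qed

lemma sum_rep_shift_act:
  assumes \<omega>: "fixed_by H \<omega>"
  shows "(\<Sum>v\<in>quot H. f (shift_act (rep v) (shift_act h \<omega>))) = (\<Sum>v\<in>quot H. f (shift_act (rep v) \<omega>))"
proof -
  define r where "r v = coset (rep v + h) H" for v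
  have "inj_on r (quot H)" unfolding r_def by (rule inj_on_coset_rep_add[OF normal])
  moreover have "r ` quot H \<subseteq> quot H" unfolding r_def quot_def by auto
  ultimately have bij: "bij_betw r (quot H) (quot H)"
    using endo_inj_surj[OF finite_quot] by (simp add: bij_betw_def)
  have "(\<Sum>v\<in>quot H. f (shift_act (rep v) (shift_act h \<omega>))) = (\<Sum>v\<in>quot H. f (shift_act (rep (r v)) \<omega>))"
    by (simp add: shift_act_shift_act r_def shift_act_rep_coset[OF normal \<omega>])
  also have "\<dots> = (\<Sum>v\<in>quot H. f (shift_act (rep v) \<omega>))"
    by (rule sum.reindex_bij_betw[OF bij])
  finally show ?thesis .
qed

lemma empirical_quot_config:
  fixes f :: "('g \<Rightarrow> 'a) \<Rightarrow> real"
  assumes \<omega>: "\<omega> \<in> S" and f: "f \<in> borel_measurable (shift_space A)"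
  shows "integral\<^sup>L (empirical A (quot H) (quot_config H \<omega>)) f
           = (\<Sum>v\<in>quot H. f (shift_act (rep v) \<omega>)) / card (quot H)"
    and "prob_on A (empirical A (quot H) (quot_config H \<omega>))"
proof -
  have views_measurable:
    "(\<lambda>v. Pi_v v (quot_config H \<omega>)) \<in> measurable (uniform_count_measure (quot H)) (shift_space A)"
    using measurable_Pi_v[of _ H "count_space (quot H \<rightarrow>\<^sub>E A)" A] quot_config_in_PiE[of \<omega> A H]
      \<omega> support_config
    by (auto simp: fin_config_space_def measurable_cong_sets[OF sets_uniform_count_measure_count_space refl])
  then show "prob_on A (empirical A (quot H) (quot_config H \<omega>))"
    using prob_space.prob_space_distr[OF prob_space_uniform_count_measure[OF finite_quot quot_nonempty]]
    by (simp add: prob_on_def empirical_def)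
  have "integral\<^sup>L (empirical A (quot H) (quot_config H \<omega>)) f
      = (\<Sum>v\<in>quot H. f (Pi_v v (quot_config H \<omega>))) / card (quot H)"
    unfolding empirical_def
    by (simp add: integral_distr[OF views_measurable f] integral_uniform_count_measure[OF finite_quot])
  then show "integral\<^sup>L (empirical A (quot H) (quot_config H \<omega>)) f
           = (\<Sum>v\<in>quot H. f (shift_act (rep v) \<omega>)) / card (quot H)"
    using Pi_v_quot_config[OF normal _ support_fixed[OF \<omega>]] by simp
qed

text \<open>For ergodic \<open>\<nu>\<close> the support is a single orbit, on which the average of \<open>f\<close> over the
  shifts by coset representatives is constant.\<close>

lemma integral_eq_orbit_average:
  fixes f :: "('g \<Rightarrow> 'a) \<Rightarrow> real"
  assumes E: "ergodic_measure A \<nu>" and \<omega>: "\<omega> \<in> S" and f: "f \<in> borel_measurable (shift_space A)"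
  shows "integral\<^sup>L \<nu> f = (\<Sum>v\<in>quot H. f (shift_act (rep v) \<omega>)) / card (quot H)"
proof -
  interpret prob_space \<nu> using prob_onD(1)[OF prob_on] .
  define Orb where "Orb = range (\<lambda>h. shift_act h \<omega>)"
  define avg where "avg y = (\<Sum>v\<in>quot H. f (shift_act (rep v) y))" for y
  have Orb_S: "Orb \<subseteq> S" unfolding Orb_def using support_invariant \<omega> by auto
  then have Orb: "finite Orb" "Orb \<subseteq> config A" using finite_support support_config finite_subset by auto
  have measure_Orb: "measure \<nu> Orb = 1"
    using ergodic_measure_orbit[OF E _ support_atoms[OF \<omega>]] Orb \<omega> support_config
    by (auto simp: Orb_def)
  have "integral\<^sup>L \<nu> f = (\<Sum>y\<in>Orb. f (shift_act (rep v) y) * measure \<nu> {y})" for v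
    using integral_shift_act[OF invariant f, of "rep v"]
      integral_finite_support[OF prob_on Orb measure_Orb
        measurable_comp[OF measurable_shift_act f, unfolded comp_def]]
    by simp
  then have "card (quot H) * integral\<^sup>L \<nu> f
      = (\<Sum>v\<in>quot H. \<Sum>y\<in>Orb. f (shift_act (rep v) y) * measure \<nu> {y})" by simp
  also have "\<dots> = (\<Sum>y\<in>Orb. avg y * measure \<nu> {y})"
    unfolding avg_def by (subst sum.swap) (simp add: sum_distrib_right)
  also have "\<dots> = (\<Sum>y\<in>Orb. avg \<omega> * measure \<nu> {y})"
  proof (rule sum.cong)
    fix y assume "y \<in> Orb"
    then obtain h where "y = shift_act h \<omega>" by (auto simp: Orb_def)
    then show "avg y * measure \<nu> {y} = avg \<omega> * measure \<nu> {y}"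
      using sum_rep_shift_act[OF support_fixed[OF \<omega>], of f h] by (simp add: avg_def)
  qed simp
  also have "\<dots> = avg \<omega> * measure \<nu> Orb"
  proof -
    have "{y} \<in> sets \<nu>" if "y \<in> Orb" for y
      using that Orb(2) prob_onD(2)[OF prob_on] sets_shift_space_singleton by blast
    then show ?thesis by (simp add: sum_distrib_left[symmetric] measure_eq_sum_singleton[OF Orb(1)])
  qed
  finally have "card (quot H) * integral\<^sup>L \<nu> f = avg \<omega>" using measure_Orb by simp
  moreover have "card (quot H) > 0" using finite_quot quot_nonempty by (simp add: card_gt_0_iff)
  ultimately show ?thesis by (simp add: avg_def field_simps)
qed

lemma empirical_model_in_weak_nbhd:
  assumes E: "ergodic_measure A \<nu>" and "\<nu> \<in> weak_nbhd A \<mu> F \<epsilon>" "F \<subseteq> cont_funs A"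
  shows "measure model {\<rho> \<in> space model. empirical A (quot H) \<rho> \<in> weak_nbhd A \<mu> F \<epsilon>} = 1"
proof (rule measure_model_eq_1)
  fix \<omega> assume \<omega>: "\<omega> \<in> S"
  show "empirical A (quot H) (quot_config H \<omega>) \<in> weak_nbhd A \<mu> F \<epsilon>"
  proof (rule weak_nbhd_integral_cong[OF assms(2) empirical_quot_config(2)[OF \<omega>]])
    fix f assume "f \<in> F"
    then have "f \<in> borel_measurable (shift_space A)"
      using assms(3) by (auto simp: cont_funs_def intro: borel_measurable_continuous_on_config)
    then show "integral\<^sup>L (empirical A (quot H) (quot_config H \<omega>)) f = integral\<^sup>L \<nu> f"
      using empirical_quot_config(1)[OF \<omega>] integral_eq_orbit_average[OF E \<omega>] by simp
  qed (rule borel_measurable_const)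
qed

end

lemma
  fixes \<mu> :: "('g::group_add \<Rightarrow> 'a::discrete_topology) measure"
  assumes rf: "rf_approx \<Gamma>" and models: "\<And>n. periodic_model (\<Gamma> n) A (\<nu>s n) (Ss n)"
    and conv: "\<And>F \<epsilon>. finite F \<Longrightarrow> F \<subseteq> cont_funs A \<Longrightarrow> \<epsilon> > 0 \<Longrightarrow>
      eventually (\<lambda>n. \<nu>s n \<in> weak_nbhd A \<mu> F \<epsilon>) sequentially"
  shows rf_model_of_periodic_models: "rf_model A \<mu>"
    and erf_model_of_periodic_models: "(\<And>n. ergodic_measure A (\<nu>s n)) \<Longrightarrow> erf_model A \<mu>"
proof -
  define \<mu>s where "\<mu>s n = distr (\<nu>s n) (fin_config_space (quot (\<Gamma> n)) A) (quot_config (\<Gamma> n))" for n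
  have seq: "model_seq A \<Gamma> \<mu>s"
    unfolding model_seq_def \<mu>s_def
    using periodic_model.prob_space_model[OF models] periodic_model.model_right_invariant[OF models]
    by simp
  have views: "(\<lambda>n. real (card {v \<in> quot (\<Gamma> n). distr (\<mu>s n) (shift_space A) (Pi_v v) \<in> weak_nbhd A \<mu> F \<epsilon>})
      / real (card (quot (\<Gamma> n)))) \<longlonglongrightarrow> 1"
    if F: "finite F" "F \<subseteq> cont_funs A" "\<epsilon> > 0" for F \<epsilon>
  proof (rule tendsto_eventually)
    show "eventually (\<lambda>n. real (card {v \<in> quot (\<Gamma> n). distr (\<mu>s n) (shift_space A) (Pi_v v) \<in> weak_nbhd A \<mu> F \<epsilon>})
      / real (card (quot (\<Gamma> n))) = 1) sequentially"
      using conv[OF F]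
    proof eventually_elim
      case (elim n)
      then have "{v \<in> quot (\<Gamma> n). distr (\<mu>s n) (shift_space A) (Pi_v v) \<in> weak_nbhd A \<mu> F \<epsilon>} = quot (\<Gamma> n)"
        using periodic_model.Pi_v_model_in_weak_nbhd[OF models _ F(2)] by (auto simp: \<mu>s_def)
      moreover have "card (quot (\<Gamma> n)) > 0"
        using rf quot_nonempty by (simp add: rf_approx_def card_gt_0_iff)
      ultimately show ?case by simp
    qed
  qed
  show "rf_model A \<mu>" unfolding rf_model_def using rf seq views by blast
  assume ergodic: "\<And>n. ergodic_measure A (\<nu>s n)"
  have "(\<lambda>n. measure (\<mu>s n) {\<rho> \<in> space (\<mu>s n). empirical A (quot (\<Gamma> n)) \<rho> \<in> weak_nbhd A \<mu> F \<epsilon>}) \<longlonglongrightarrow> 1"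
    if F: "finite F" "F \<subseteq> cont_funs A" "\<epsilon> > 0" for F \<epsilon>
  proof (rule tendsto_eventually)
    show "eventually (\<lambda>n. measure (\<mu>s n) {\<rho> \<in> space (\<mu>s n).
        empirical A (quot (\<Gamma> n)) \<rho> \<in> weak_nbhd A \<mu> F \<epsilon>} = 1) sequentially"
      using conv[OF F]
    proof eventually_elim
      case (elim n)
      show ?case
        unfolding \<mu>s_def by (rule periodic_model.empirical_model_in_weak_nbhd[OF models ergodic elim F(2)])
    qed
  qed
  then show "erf_model A \<mu>" unfolding erf_model_def using rf seq views by blast
qed

section \<open>Weak* approximation by a single sequence\<close>

lemma config_eq_PiE: "config A = Pi\<^sub>E UNIV (\<lambda>_. A)"
  by (auto simp: config_def PiE_UNIV_domain)

lemma compact_config: "finite A \<Longrightarrow> compact (config A :: ('g \<Rightarrow> 'a::topological_space) set)"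
proof -
  assume "finite A"
  then have "compactin (product_topology (\<lambda>_::'g. (euclidean::'a topology)) UNIV) (Pi\<^sub>E UNIV (\<lambda>_. A))"
    unfolding compactin_PiE by (auto intro: finite_imp_compact)
  then show ?thesis unfolding config_eq_PiE euclidean_product_topology by simp
qed

lemma continuous_on_config_local_cylinder:
  fixes f :: "('g \<Rightarrow> 'a::discrete_topology) \<Rightarrow> real"
  assumes f: "continuous_on (config A) f" and \<omega>: "\<omega> \<in> config A" and e: "e > 0"
  obtains J where "finite J" "\<And>y. y \<in> config A \<Longrightarrow> y \<in> cylinder J \<omega> \<Longrightarrow> \<bar>f y - f \<omega>\<bar> < e"
proof -
  obtain U where U: "open U" "\<omega> \<in> U" "\<forall>y\<in>config A. y \<in> U \<longrightarrow> f y \<in> ball (f \<omega>) e"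
    using f \<omega> e unfolding continuous_on_topological by (metis centre_in_ball open_ball)
  have "openin (product_topology (\<lambda>i. euclidean) UNIV) U" using U(1) by (simp add: open_fun_def)
  from product_topology_open_contains_basis[OF this U(2)]
  obtain X where X: "\<omega> \<in> Pi\<^sub>E UNIV X" "finite {i. X i \<noteq> topspace euclidean}" "Pi\<^sub>E UNIV X \<subseteq> U"
    by blast
  define J where "J = {i. X i \<noteq> UNIV}"
  have "cylinder J \<omega> \<subseteq> Pi\<^sub>E UNIV X"
  proof
    fix y assume y: "y \<in> cylinder J \<omega>"
    have "y i \<in> X i" for i
      using y X(1) by (cases "i \<in> J") (auto simp: cylinder_def J_def PiE_UNIV_domain)
    then show "y \<in> Pi\<^sub>E UNIV X" by (simp add: PiE_UNIV_domain)
  qed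
  show ?thesis
  proof (rule that)
    show "finite J" using X(2) by (simp add: J_def)
    fix y assume "y \<in> config A" "y \<in> cylinder J \<omega>"
    then have "y \<in> U" using \<open>cylinder J \<omega> \<subseteq> Pi\<^sub>E UNIV X\<close> X(3) by blast
    then have "dist (f \<omega>) (f y) < e" using U(3) \<open>y \<in> config A\<close> by auto
    then show "\<bar>f y - f \<omega>\<bar> < e"
      using dist_real_def[of "f y" "f \<omega>"] dist_commute[of "f \<omega>" "f y"] by linarith
  qed
qed

text \<open>Compactness of \<open>A\<^sup>G\<close> makes the finite sets of coordinates of the previous lemma uniform.\<close>

lemma continuous_on_config_uniform_cylinder:
  fixes f :: "('g \<Rightarrow> 'a::discrete_topology) \<Rightarrow> real"
  assumes f: "continuous_on (config A) f" and A: "finite A" and e: "e > 0"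
  obtains J where "finite J"
    "\<And>x y. x \<in> config A \<Longrightarrow> y \<in> config A \<Longrightarrow> \<forall>j\<in>J. x j = y j \<Longrightarrow> \<bar>f x - f y\<bar> < e"
proof -
  have "\<exists>J. finite J \<and> (\<forall>y\<in>config A. y \<in> cylinder J \<omega> \<longrightarrow> \<bar>f y - f \<omega>\<bar> < e/2)"
    if \<omega>: "\<omega> \<in> config A" for \<omega>
  proof -
    obtain J where "finite J" "\<And>y. y \<in> config A \<Longrightarrow> y \<in> cylinder J \<omega> \<Longrightarrow> \<bar>f y - f \<omega>\<bar> < e/2"
      using continuous_on_config_local_cylinder[OF f \<omega> half_gt_zero[OF e]] by blast
    then show ?thesis by blast
  qed
  then obtain Jf where Jf: "\<And>\<omega>. \<omega> \<in> config A \<Longrightarrow>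
      finite (Jf \<omega>) \<and> (\<forall>y\<in>config A. y \<in> cylinder (Jf \<omega>) \<omega> \<longrightarrow> \<bar>f y - f \<omega>\<bar> < e/2)"
    by metis
  have "\<And>\<omega>. \<omega> \<in> config A \<Longrightarrow> open (cylinder (Jf \<omega>) \<omega>)" using Jf open_cylinder by blast
  moreover have "config A \<subseteq> (\<Union>\<omega>\<in>config A. cylinder (Jf \<omega>) \<omega>)" by (auto simp: cylinder_def)
  ultimately obtain W where W: "W \<subseteq> config A" "finite W" "config A \<subseteq> (\<Union>\<omega>\<in>W. cylinder (Jf \<omega>) \<omega>)"
    by (rule compactE_image[OF compact_config[OF A]]) blast
  show ?thesis
  proof (rule that[of "\<Union>\<omega>\<in>W. Jf \<omega>"])
    show "finite (\<Union>\<omega>\<in>W. Jf \<omega>)" using W Jf by auto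
    fix x y assume x: "x \<in> config A" and y: "y \<in> config A" and xy: "\<forall>j\<in>\<Union>\<omega>\<in>W. Jf \<omega>. x j = y j"
    obtain \<omega> where \<omega>: "\<omega> \<in> W" "x \<in> cylinder (Jf \<omega>) \<omega>" using W(3) x by blast
    then have "y \<in> cylinder (Jf \<omega>) \<omega>" using xy by (auto simp: cylinder_def)
    then have "\<bar>f x - f \<omega>\<bar> < e/2" "\<bar>f y - f \<omega>\<bar> < e/2"
      using Jf[of \<omega>] \<omega> W(1) x y by blast+
    then show "\<bar>f x - f y\<bar> < e" by linarith
  qed
qed

lemma continuous_on_config_bounded:
  fixes f :: "('g \<Rightarrow> 'a::discrete_topology) \<Rightarrow> real"
  assumes "continuous_on (config A) f" "finite A"
  obtains M where "M \<ge> 0" "\<And>x. x \<in> config A \<Longrightarrow> \<bar>f x\<bar> \<le> M"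
proof -
  have "bounded (f ` config A)"
    by (intro compact_imp_bounded compact_continuous_image assms compact_config)
  then obtain M where "\<forall>x\<in>config A. \<bar>f x\<bar> \<le> M" unfolding bounded_iff by auto
  then show ?thesis by (intro that[of "max M 0"]) auto
qed

lemma integrable_continuous_on_config:
  fixes f :: "('g \<Rightarrow> 'a::discrete_topology) \<Rightarrow> real"
  assumes f: "continuous_on (config A) f" and A: "finite A" and P: "prob_on A \<nu>"
  shows "integrable \<nu> f"
proof -
  interpret prob_space \<nu> using prob_onD(1)[OF P] .
  obtain M where M: "\<And>x. x \<in> config A \<Longrightarrow> \<bar>f x\<bar> \<le> M"
    using continuous_on_config_bounded[OF f A] by blast
  show ?thesis
  proof (rule integrable_const_bound)
    show "AE x in \<nu>. norm (f x) \<le> M" using M prob_onD(3)[OF P] by (intro AE_I2) auto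
    show "f \<in> borel_measurable \<nu>"
      by (rule prob_on_measurable[OF P borel_measurable_continuous_on_config[OF f]])
  qed
qed

lemma abs_integral_le_prob_on:
  fixes f :: "('g \<Rightarrow> 'a::topological_space) \<Rightarrow> real"
  assumes P: "prob_on A \<nu>" and f: "integrable \<nu> f" and c: "\<And>x. x \<in> config A \<Longrightarrow> \<bar>f x\<bar> \<le> c"
  shows "\<bar>integral\<^sup>L \<nu> f\<bar> \<le> c"
proof -
  interpret prob_space \<nu> using prob_onD(1)[OF P] .
  have "integral\<^sup>L \<nu> f \<le> integral\<^sup>L \<nu> (\<lambda>_. c)"
    by (rule integral_mono[OF f]) (use prob_onD(3)[OF P] in \<open>auto dest!: c simp: abs_le_iff\<close>)
  moreover have "integral\<^sup>L \<nu> (\<lambda>_. -c) \<le> integral\<^sup>L \<nu> f"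
    by (rule integral_mono[OF _ f]) (use prob_onD(3)[OF P] in \<open>auto dest!: c simp: abs_le_iff\<close>)
  ultimately show ?thesis by (simp add: prob_space abs_le_iff)
qed

lemma continuous_on_indicator_cylinder:
  "finite B \<Longrightarrow> continuous_on S (indicator (cylinder B p) :: ('g \<Rightarrow> 'a::discrete_topology) \<Rightarrow> real)"
  by (rule continuous_on_finite_dependence) (auto simp: cylinder_def indicator_def)

definition extend_outside :: "'g set \<Rightarrow> 'a \<Rightarrow> ('g \<Rightarrow> 'a) \<Rightarrow> ('g \<Rightarrow> 'a)" where
  "extend_outside B a \<omega> = (\<lambda>j. if j \<in> B then \<omega> j else a)"

lemma extend_outside_eq_sum:
  fixes f :: "('g \<Rightarrow> 'a) \<Rightarrow> real"
  assumes B: "finite B" and A: "finite A" and \<omega>: "\<omega> \<in> config A"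
  shows "f (extend_outside B a \<omega>)
    = (\<Sum>p\<in>B \<rightarrow>\<^sub>E A. f (extend_outside B a p) * indicator (cylinder B p) \<omega>)"
proof -
  define q where "q = restrict \<omega> B"
  have q: "q \<in> B \<rightarrow>\<^sub>E A" using \<omega> by (auto simp: q_def config_def)
  have "indicator (cylinder B p) \<omega> = (if p = q then 1 else 0 :: real)" if "p \<in> B \<rightarrow>\<^sub>E A" for p
    unfolding indicator_def cylinder_def
    using that by (auto simp: q_def fun_eq_iff PiE_iff extensional_def) metis
  then have "(\<Sum>p\<in>B \<rightarrow>\<^sub>E A. f (extend_outside B a p) * indicator (cylinder B p) \<omega>)
      = (\<Sum>p\<in>B \<rightarrow>\<^sub>E A. if p = q then f (extend_outside B a p) else 0)"
    by (intro sum.cong) simp_all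
  also have "\<dots> = f (extend_outside B a q)" using q B A by (simp add: finite_PiE)
  also have "extend_outside B a q = extend_outside B a \<omega>" by (auto simp: extend_outside_def q_def)
  finally show ?thesis by simp
qed

lemma integral_extend_outside:
  fixes f :: "('g \<Rightarrow> 'a::discrete_topology) \<Rightarrow> real"
  assumes B: "finite B" and A: "finite A" and P: "prob_on A \<nu>"
  shows "(\<integral>\<omega>. f (extend_outside B a \<omega>) \<partial>\<nu>)
    = (\<Sum>p\<in>B \<rightarrow>\<^sub>E A. f (extend_outside B a p) * (\<integral>\<omega>. indicator (cylinder B p) \<omega> \<partial>\<nu>))"
proof -
  have ind: "integrable \<nu> (indicator (cylinder B p) :: _ \<Rightarrow> real)" for p
    using integrable_continuous_on_config[OF continuous_on_indicator_cylinder[OF B] A P] .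
  have "(\<integral>\<omega>. f (extend_outside B a \<omega>) \<partial>\<nu>)
      = (\<integral>\<omega>. (\<Sum>p\<in>B \<rightarrow>\<^sub>E A. f (extend_outside B a p) * indicator (cylinder B p) \<omega>) \<partial>\<nu>)"
    by (rule Bochner_Integration.integral_cong[OF refl])
       (use extend_outside_eq_sum[OF B A] prob_onD(3)[OF P] in auto)
  also have "\<dots> = (\<Sum>p\<in>B \<rightarrow>\<^sub>E A. (\<integral>\<omega>. f (extend_outside B a p) * indicator (cylinder B p) \<omega> \<partial>\<nu>))"
    by (rule Bochner_Integration.integral_sum) (use ind in auto)
  also have "\<dots> = (\<Sum>p\<in>B \<rightarrow>\<^sub>E A. f (extend_outside B a p) * (\<integral>\<omega>. indicator (cylinder B p) \<omega> \<partial>\<nu>))"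
    by simp
  finally show ?thesis .
qed

lemma abs_integral_diff_le_cylinders:
  fixes f :: "('g \<Rightarrow> 'a::discrete_topology) \<Rightarrow> real"
  assumes A: "finite A" "a \<in> A" and B: "finite B" and P: "prob_on A \<nu>" "prob_on A \<mu>"
    and f: "continuous_on (config A) f"
    and osc: "\<And>x y. x \<in> config A \<Longrightarrow> y \<in> config A \<Longrightarrow> \<forall>j\<in>B. x j = y j \<Longrightarrow> \<bar>f x - f y\<bar> \<le> \<eta>"
    and bound: "\<And>x. x \<in> config A \<Longrightarrow> \<bar>f x\<bar> \<le> M"
    and cyl: "\<And>p. p \<in> B \<rightarrow>\<^sub>E A \<Longrightarrow>
      \<bar>(\<integral>\<omega>. indicator (cylinder B p) \<omega> \<partial>\<nu>) - (\<integral>\<omega>. indicator (cylinder B p) \<omega> \<partial>\<mu>)\<bar> \<le> \<delta>"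
  shows "\<bar>integral\<^sup>L \<nu> f - integral\<^sup>L \<mu> f\<bar> \<le> 2 * \<eta> + M * card (B \<rightarrow>\<^sub>E A) * \<delta>"
proof -
  define g where "g \<omega> = f (extend_outside B a \<omega>)" for \<omega>
  have extend_config: "extend_outside B a \<omega> \<in> config A" if "\<omega> \<in> config A \<or> \<omega> \<in> B \<rightarrow>\<^sub>E A" for \<omega>
    using that A(2) by (auto simp: extend_outside_def config_def PiE_iff)
  have g: "continuous_on (config A) g"
    unfolding g_def
    by (rule continuous_on_finite_dependence[OF B]) (auto simp: extend_outside_def intro!: arg_cong[where f=f])
  have f_g: "\<bar>integral\<^sup>L \<rho> f - integral\<^sup>L \<rho> g\<bar> \<le> \<eta>" if \<rho>: "prob_on A \<rho>" for \<rho>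
  proof -
    have "integrable \<rho> f" "integrable \<rho> g"
      using integrable_continuous_on_config[OF _ A(1) \<rho>] f g by auto
    moreover have "\<bar>f \<omega> - g \<omega>\<bar> \<le> \<eta>" if "\<omega> \<in> config A" for \<omega>
      using osc[OF that extend_config] that by (simp add: g_def extend_outside_def)
    ultimately show ?thesis
      by (simp add: abs_integral_le_prob_on[OF \<rho>] flip: Bochner_Integration.integral_diff)
  qed
  have "\<bar>integral\<^sup>L \<nu> g - integral\<^sup>L \<mu> g\<bar>
      = \<bar>\<Sum>p\<in>B \<rightarrow>\<^sub>E A. f (extend_outside B a p) *
          ((\<integral>\<omega>. indicator (cylinder B p) \<omega> \<partial>\<nu>) - (\<integral>\<omega>. indicator (cylinder B p) \<omega> \<partial>\<mu>))\<bar>"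
    unfolding g_def integral_extend_outside[OF B A(1) P(1)] integral_extend_outside[OF B A(1) P(2)]
    by (simp add: sum_subtractf right_diff_distrib)
  also have "\<dots> \<le> (\<Sum>p\<in>B \<rightarrow>\<^sub>E A. M * \<delta>)"
  proof (rule order_trans[OF sum_abs sum_mono])
    fix p assume p: "p \<in> B \<rightarrow>\<^sub>E A"
    then have "\<bar>f (extend_outside B a p)\<bar> \<le> M" using bound extend_config by blast
    then show "\<bar>f (extend_outside B a p) * ((\<integral>\<omega>. indicator (cylinder B p) \<omega> \<partial>\<nu>)
        - (\<integral>\<omega>. indicator (cylinder B p) \<omega> \<partial>\<mu>))\<bar> \<le> M * \<delta>"
      unfolding abs_mult using cyl[OF p] by (intro mult_mono) auto
  qed
  finally show ?thesis using f_g[OF P(1)] f_g[OF P(2)] by (simp add: algebra_simps)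
qed

lemma eventually_abs_integral_diff_less:
  fixes f :: "('g \<Rightarrow> 'a::discrete_topology) \<Rightarrow> real"
  assumes A: "finite A" "a \<in> A" and B: "\<And>k. finite (B k)"
    and exhausting: "\<And>J. finite J \<Longrightarrow> eventually (\<lambda>k. J \<subseteq> B k) sequentially"
    and P: "prob_on A \<mu>" "\<And>k. prob_on A (\<nu>s k)"
    and cyl: "\<And>k p. p \<in> B k \<rightarrow>\<^sub>E A \<Longrightarrow>
      \<bar>(\<integral>\<omega>. indicator (cylinder (B k) p) \<omega> \<partial>\<nu>s k) - (\<integral>\<omega>. indicator (cylinder (B k) p) \<omega> \<partial>\<mu>)\<bar>
        \<le> inverse (real (Suc k) * (real (card (B k \<rightarrow>\<^sub>E A)) + 1))"
    and f: "continuous_on (config A) f" and \<epsilon>: "\<epsilon> > 0"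
  shows "eventually (\<lambda>k. \<bar>integral\<^sup>L (\<nu>s k) f - integral\<^sup>L \<mu> f\<bar> < \<epsilon>) sequentially"
proof -
  obtain J where J: "finite J"
    "\<And>x y. x \<in> config A \<Longrightarrow> y \<in> config A \<Longrightarrow> \<forall>j\<in>J. x j = y j \<Longrightarrow> \<bar>f x - f y\<bar> < \<epsilon>/4"
    using continuous_on_config_uniform_cylinder[OF f A(1), of "\<epsilon>/4"] \<epsilon> by auto
  obtain M where M: "M \<ge> 0" "\<And>x. x \<in> config A \<Longrightarrow> \<bar>f x\<bar> \<le> M"
    using continuous_on_config_bounded[OF f A(1)] by blast
  have "(\<lambda>k. M * inverse (real (Suc k))) \<longlonglongrightarrow> M * 0"
    by (intro tendsto_mult tendsto_const LIMSEQ_inverse_real_of_nat)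
  moreover have "M * 0 < \<epsilon>/4" using \<epsilon> by simp
  ultimately have "eventually (\<lambda>k. M * inverse (real (Suc k)) < \<epsilon>/4) sequentially"
    by (rule order_tendstoD(2))
  then show ?thesis
    using exhausting[OF J(1)]
  proof eventually_elim
    case (elim k)
    let ?c = "real (card (B k \<rightarrow>\<^sub>E A))"
    have "?c * inverse (real (Suc k) * (?c + 1)) = ?c / (?c + 1) * inverse (real (Suc k))"
      by (simp add: divide_inverse inverse_mult_distrib del: of_nat_Suc)
    also have "\<dots> \<le> inverse (real (Suc k))" by (intro mult_left_le_one_le) auto
    finally have "M * ?c * inverse (real (Suc k) * (?c + 1)) \<le> M * inverse (real (Suc k))"
      using M(1) by (simp add: mult.assoc mult_left_mono del: of_nat_Suc)
    moreover have "\<bar>integral\<^sup>L (\<nu>s k) f - integral\<^sup>L \<mu> f\<bar>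
        \<le> 2 * (\<epsilon>/4) + M * ?c * inverse (real (Suc k) * (?c + 1))"
    proof (rule abs_integral_diff_le_cylinders[OF A B P(2) P(1) f _ M(2) cyl])
      show "\<bar>f x - f y\<bar> \<le> \<epsilon>/4" if "x \<in> config A" "y \<in> config A" "\<forall>j\<in>B k. x j = y j" for x y
        using J(2)[OF that(1,2)] that(3) elim(2) by (simp add: subset_eq)
    qed
    ultimately show ?case using elim(1) \<epsilon> by linarith
  qed
qed

text \<open>Countability of \<open>G\<close> provides an exhausting sequence of finite sets \<open>B\<^sub>k\<close>; approximating
  \<open>\<mu>\<close> on the cylinders over \<open>B\<^sub>k\<close> closely enough yields a sequence that converges on every
  continuous function.\<close>

lemma weak_approximating_sequence:
  fixes \<mu> :: "('g \<Rightarrow> 'a::discrete_topology) measure"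
  assumes G: "countable (UNIV :: 'g set)" and A: "finite A" and P: "prob_on A \<mu>"
    and approx: "\<And>F \<epsilon>. finite F \<Longrightarrow> F \<subseteq> cont_funs A \<Longrightarrow> \<epsilon> > 0 \<Longrightarrow> \<exists>\<nu>. Q \<nu> \<and> \<nu> \<in> weak_nbhd A \<mu> F \<epsilon>"
  obtains \<nu>s where "\<And>k. Q (\<nu>s k)"
    "\<And>F \<epsilon>. finite F \<Longrightarrow> F \<subseteq> cont_funs A \<Longrightarrow> \<epsilon> > 0 \<Longrightarrow>
       eventually (\<lambda>k. \<nu>s k \<in> weak_nbhd A \<mu> F \<epsilon>) sequentially"
proof -
  interpret prob_space \<mu> using prob_onD(1)[OF P] .
  obtain a where a: "a \<in> A"
    using not_empty prob_onD(3)[OF P] by (auto simp: config_def)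
  define B where "B k = from_nat_into (UNIV :: 'g set) ` {..<k}" for k
  define cyls where "cyls k = (\<lambda>p. indicator (cylinder (B k) p) :: _ \<Rightarrow> real) ` (B k \<rightarrow>\<^sub>E A)" for k
  have B: "finite (B k)" for k by (simp add: B_def)
  have exhausting: "eventually (\<lambda>k. J \<subseteq> B k) sequentially" if "finite J" for J
  proof -
    obtain C where "finite C" "J = from_nat_into UNIV ` C"
      using finite_subset_image[OF \<open>finite J\<close>, of "from_nat_into UNIV" UNIV] G by auto
    then obtain k0 where "J \<subseteq> B k0" using finite_nat_bounded[of C] by (auto simp: B_def)
    from eventually_ge_at_top[of k0] show ?thesis
      by eventually_elim (use \<open>J \<subseteq> B k0\<close> in \<open>auto simp: B_def\<close>)
  qed
  have "cyls k \<subseteq> cont_funs A" for k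
    unfolding cyls_def cont_funs_def using continuous_on_indicator_cylinder[OF B] by blast
  then have "\<exists>\<nu>. Q \<nu> \<and> \<nu> \<in> weak_nbhd A \<mu> (cyls k) (inverse (real (Suc k) * (real (card (B k \<rightarrow>\<^sub>E A)) + 1)))"
    for k
    using A B by (intro approx) (auto simp: cyls_def intro!: finite_imageI finite_PiE)
  then obtain \<nu>s where \<nu>s: "\<And>k. Q (\<nu>s k)"
    "\<And>k. \<nu>s k \<in> weak_nbhd A \<mu> (cyls k) (inverse (real (Suc k) * (real (card (B k \<rightarrow>\<^sub>E A)) + 1)))"
    by metis
  have "prob_on A (\<nu>s k)" for k using \<nu>s(2) by (simp add: weak_nbhd_def)
  moreover have "\<bar>(\<integral>\<omega>. indicator (cylinder (B k) p) \<omega> \<partial>\<nu>s k) - (\<integral>\<omega>. indicator (cylinder (B k) p) \<omega> \<partial>\<mu>)\<bar>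
      \<le> inverse (real (Suc k) * (real (card (B k \<rightarrow>\<^sub>E A)) + 1))" if "p \<in> B k \<rightarrow>\<^sub>E A" for k p
    using \<nu>s(2)[of k] that by (auto simp: weak_nbhd_def cyls_def intro: less_imp_le)
  ultimately have close: "eventually (\<lambda>k. \<bar>integral\<^sup>L (\<nu>s k) f - integral\<^sup>L \<mu> f\<bar> < \<epsilon>) sequentially"
    if "continuous_on (config A) f" "\<epsilon> > 0" for f :: "('g \<Rightarrow> 'a) \<Rightarrow> real" and \<epsilon> :: real
    using eventually_abs_integral_diff_less[OF A(1) a B exhausting P] that by blast
  show ?thesis
  proof (rule that[OF \<nu>s(1)])
    fix F :: "(('g \<Rightarrow> 'a) \<Rightarrow> real) set" and \<epsilon> :: real
    assume F: "finite F" "F \<subseteq> cont_funs A" "\<epsilon> > 0"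
    then have "eventually (\<lambda>k. \<forall>f\<in>F. \<bar>integral\<^sup>L (\<nu>s k) f - integral\<^sup>L \<mu> f\<bar> < \<epsilon>) sequentially"
      using close by (intro eventually_ball_finite) (auto simp: cont_funs_def)
    then show "eventually (\<lambda>k. \<nu>s k \<in> weak_nbhd A \<mu> F \<epsilon>) sequentially"
      by eventually_elim (use \<nu>s(2) in \<open>auto simp: weak_nbhd_def\<close>)
  qed
qed

section \<open>Changing the alphabet\<close>

lemma continuous_on_map_config:
  fixes c :: "'a::discrete_topology \<Rightarrow> 'b::topological_space"
  shows "continuous_on S (\<lambda>\<omega>::'g \<Rightarrow> 'a. \<lambda>g. c (\<omega> g))"
proof (rule continuous_on_coordinatewise_then_product)
  fix i
  show "continuous_on S (\<lambda>\<omega>::'g \<Rightarrow> 'a. c (\<omega> i))"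
    by (rule continuous_on_compose2[of UNIV c S "\<lambda>\<omega>. \<omega> i"])
       (auto intro: continuous_on_subset[OF continuous_on_product_coordinates])
qed

locale shift_equivariant_map =
  fixes T :: "('g::group_add \<Rightarrow> 'a::discrete_topology) \<Rightarrow> ('g \<Rightarrow> 'b::discrete_topology)"
    and A :: "'a set" and B :: "'b set"
  assumes continuous: "continuous_on UNIV T"
    and maps_config: "\<And>\<omega>. \<omega> \<in> config A \<Longrightarrow> T \<omega> \<in> config B"
    and commutes: "\<And>h \<omega>. T (shift_act h \<omega>) = shift_act h (T \<omega>)"
begin

lemma measurable: "T \<in> measurable (shift_space A) (shift_space B)"
  by (rule measurable_shift_spaceI) (use continuous maps_config in \<open>auto intro: continuous_on_subset\<close>)

lemma comp_in_cont_funs: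
  assumes "f \<in> cont_funs B"
  shows "(\<lambda>\<omega>. f (T \<omega>)) \<in> cont_funs A"
proof -
  have "continuous_on (config A) (\<lambda>\<omega>. f (T \<omega>))"
    by (rule continuous_on_compose2[of "config B"])
       (use assms continuous maps_config in \<open>auto simp: cont_funs_def intro: continuous_on_subset\<close>)
  then show ?thesis by (simp add: cont_funs_def)
qed

lemma prob_on_distr:
  assumes "prob_on A \<mu>"
  shows "prob_on B (distr \<mu> (shift_space B) T)"
  using prob_space.prob_space_distr[OF prob_onD(1)[OF assms] prob_on_measurable[OF assms measurable]]
  by (simp add: prob_on_def)

lemma integral_distr:
  fixes f :: "('g \<Rightarrow> 'b) \<Rightarrow> real"
  assumes "prob_on A \<mu>" "f \<in> borel_measurable (shift_space B)"
  shows "integral\<^sup>L (distr \<mu> (shift_space B) T) f = (\<integral>\<omega>. f (T \<omega>) \<partial>\<mu>)"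
  using Bochner_Integration.integral_distr[OF prob_on_measurable[OF assms(1) measurable] assms(2)] .

lemma invariant_measure_distr:
  assumes I: "invariant_measure A \<mu>"
  shows "invariant_measure B (distr \<mu> (shift_space B) T)"
proof -
  have P: "prob_on A \<mu>" by (rule invariant_measureD(1)[OF I])
  have T\<mu>: "T \<in> measurable \<mu> (shift_space B)" by (rule prob_on_measurable[OF P measurable])
  have "distr (distr \<mu> (shift_space B) T) (shift_space B) (shift_act h) = distr \<mu> (shift_space B) T" for h
  proof -
    have "distr (distr \<mu> (shift_space B) T) (shift_space B) (shift_act h)
        = distr \<mu> (shift_space B) (T \<circ> shift_act h)"
      using distr_distr[OF measurable_shift_act T\<mu>] by (simp add: comp_def commutes)
    also have "\<dots> = distr (distr \<mu> (shift_space A) (shift_act h)) (shift_space B) T"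
      by (rule distr_distr[OF measurable prob_on_measurable[OF P measurable_shift_act], symmetric])
    also have "\<dots> = distr \<mu> (shift_space B) T" using invariant_measureD(2)[OF I] by simp
    finally show ?thesis .
  qed
  then show ?thesis using prob_on_distr[OF P] by (simp add: invariant_measure_def)
qed

lemma periodic_measure_distr:
  assumes Pe: "periodic_measure A \<mu>"
  shows "periodic_measure B (distr \<mu> (shift_space B) T)"
proof -
  have I: "invariant_measure A \<mu>" using Pe by (simp add: periodic_measure_def)
  have P: "prob_on A \<mu>" by (rule invariant_measureD(1)[OF I])
  interpret prob_space \<mu> using prob_onD(1)[OF P] .
  obtain S where S: "finite S" "S \<subseteq> config A" "measure \<mu> S = 1"
    using periodic_measure_invariant_support[OF Pe] by metis
  have TS: "T ` S \<in> sets (shift_space B)"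
    using S(1,2) maps_config by (intro sets_shift_space_finite) auto
  have "measure \<mu> S \<le> measure \<mu> (T -` T ` S \<inter> space \<mu>)"
    using S(2) prob_onD(3)[OF P] measurable_sets[OF prob_on_measurable[OF P measurable] TS]
    by (intro finite_measure_mono) auto
  then have "measure (distr \<mu> (shift_space B) T) (T ` S) = 1"
    using measure_distr[OF prob_on_measurable[OF P measurable] TS] S(3) prob_le_1 by (simp add: antisym)
  then show ?thesis
    unfolding periodic_measure_def using invariant_measure_distr[OF I] TS S(1) by auto
qed

lemma ergodic_measure_distr:
  assumes E: "ergodic_measure A \<mu>"
  shows "ergodic_measure B (distr \<mu> (shift_space B) T)"
proof -
  have I: "invariant_measure A \<mu>" using E by (simp add: ergodic_measure_def)
  have P: "prob_on A \<mu>" by (rule invariant_measureD(1)[OF I])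
  have "measure (distr \<mu> (shift_space B) T) X = 0 \<or> measure (distr \<mu> (shift_space B) T) X = 1"
    if X: "X \<in> sets (shift_space B)" and inv: "\<forall>h. shift_act h ` X = X" for X
  proof -
    define X' where "X' = T -` X \<inter> config A"
    have X'_sets: "X' \<in> sets \<mu>" unfolding X'_def
      using measurable_sets[OF prob_on_measurable[OF P measurable] X] prob_onD(3)[OF P] by simp
    have sub: "shift_act h ` X' \<subseteq> X'" for h
      using inv shift_act_in_config unfolding X'_def by (fastforce simp: commutes)
    have "shift_act h ` X' = X'" for h
    proof
      show "X' \<subseteq> shift_act h ` X'"
        using sub[of "-h"] by (force intro: image_eqI[of _ _ "shift_act (-h) _"])
    qed (rule sub)
    then have "measure \<mu> X' = 0 \<or> measure \<mu> X' = 1" using E X'_sets unfolding ergodic_measure_def by blast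
    moreover have "measure (distr \<mu> (shift_space B) T) X = measure \<mu> X'"
      unfolding X'_def using measure_distr[OF prob_on_measurable[OF P measurable] X] prob_onD(3)[OF P]
      by simp
    ultimately show ?thesis by simp
  qed
  then show ?thesis unfolding ergodic_measure_def using invariant_measure_distr[OF I] by simp
qed

end

lemma shift_equivariant_map_pointwise:
  fixes c :: "'a::discrete_topology \<Rightarrow> 'b::discrete_topology"
  assumes "\<And>a. a \<in> A \<Longrightarrow> c a \<in> B"
  shows "shift_equivariant_map (\<lambda>(\<omega>::'g::group_add \<Rightarrow> 'a) g. c (\<omega> g)) A B"
  by unfold_locales
     (use assms in \<open>auto simp: config_def shift_act_def intro: continuous_on_map_config\<close>)

text \<open>The flag \<open>erg\<close> distinguishes the EPA variant, where the approximating periodic measures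
  must also be ergodic.\<close>

definition periodic_approximable ::
  "bool \<Rightarrow> 'a::topological_space set \<Rightarrow> ('g::group_add \<Rightarrow> 'a) measure \<Rightarrow> bool" where
  "periodic_approximable erg A \<mu> \<longleftrightarrow> (\<forall>F \<epsilon>. finite F \<longrightarrow> F \<subseteq> cont_funs A \<longrightarrow> \<epsilon> > 0 \<longrightarrow>
     (\<exists>\<nu>. periodic_measure A \<nu> \<and> (erg \<longrightarrow> ergodic_measure A \<nu>) \<and> \<nu> \<in> weak_nbhd A \<mu> F \<epsilon>))"

text \<open>A bijection \<open>A \<rightarrow> {0..<card A}\<close> conjugates the shifts on the two alphabets.\<close>

lemma periodic_approximable_transfer:
  fixes A :: "'a::discrete_topology set" and \<mu> :: "('g::group_add \<Rightarrow> 'a) measure"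
  assumes A: "finite A" and I: "invariant_measure A \<mu>"
    and nat: "\<And>\<mu>'::('g \<Rightarrow> nat) measure. invariant_measure {0..<card A} \<mu>' \<Longrightarrow>
      periodic_approximable erg {0..<card A} \<mu>'"
  shows "periodic_approximable erg A \<mu>"
  unfolding periodic_approximable_def
proof (intro allI impI)
  fix F :: "(('g \<Rightarrow> 'a) \<Rightarrow> real) set" and \<epsilon> :: real
  assume F: "finite F" "F \<subseteq> cont_funs A" and \<epsilon>: "\<epsilon> > 0"
  define N where "N = {0..<card A}"
  obtain c where c: "bij_betw c A N" using ex_bij_betw_finite_nat[OF A] unfolding N_def by blast
  define d where "d = the_inv_into A c"
  have dN: "d n \<in> A" if "n \<in> N" for n
    using the_inv_into_into[of c A n A] c that by (auto simp: d_def bij_betw_def)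
  have dc: "d (c a) = a" if "a \<in> A" for a
    using the_inv_into_f_f[of c A a] c that by (simp add: d_def bij_betw_def)
  define C where "C = (\<lambda>\<omega>::'g \<Rightarrow> 'a. \<lambda>g. c (\<omega> g))"
  define D where "D = (\<lambda>\<omega>::'g \<Rightarrow> nat. \<lambda>g. d (\<omega> g))"
  interpret C: shift_equivariant_map C A N
    unfolding C_def using c by (intro shift_equivariant_map_pointwise) (auto simp: bij_betw_def)
  interpret D: shift_equivariant_map D N A
    unfolding D_def using dN by (rule shift_equivariant_map_pointwise)
  have P: "prob_on A \<mu>" by (rule invariant_measureD(1)[OF I])
  define F' where "F' = (\<lambda>f \<omega>. f (D \<omega>)) ` F"
  have "finite F'" "F' \<subseteq> cont_funs N" using F D.comp_in_cont_funs by (auto simp: F'_def)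
  moreover have "periodic_approximable erg N (distr \<mu> (shift_space N) C)"
    unfolding N_def by (rule nat[OF C.invariant_measure_distr[OF I, unfolded N_def]])
  ultimately obtain \<nu>' where \<nu>': "periodic_measure N \<nu>'" "erg \<longrightarrow> ergodic_measure N \<nu>'"
    "\<nu>' \<in> weak_nbhd N (distr \<mu> (shift_space N) C) F' \<epsilon>"
    using \<epsilon> unfolding periodic_approximable_def by blast
  have P': "prob_on N \<nu>'" using \<nu>'(3) by (simp add: weak_nbhd_def)
  have "distr \<nu>' (shift_space A) D \<in> weak_nbhd A \<mu> F \<epsilon>"
    unfolding weak_nbhd_def
  proof (intro CollectI conjI ballI)
    show "prob_on A (distr \<nu>' (shift_space A) D)" by (rule D.prob_on_distr[OF P'])
    fix f assume f: "f \<in> F"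
    then have f_meas: "f \<in> borel_measurable (shift_space A)"
      using F(2) by (auto simp: cont_funs_def intro: borel_measurable_continuous_on_config)
    have "(\<integral>\<omega>. f (D \<omega>) \<partial>distr \<mu> (shift_space N) C) = (\<integral>\<omega>. f (D (C \<omega>)) \<partial>\<mu>)"
      by (rule C.integral_distr[OF P measurable_comp[OF D.measurable f_meas, unfolded comp_def]])
    also have "\<dots> = integral\<^sup>L \<mu> f"
      by (rule Bochner_Integration.integral_cong[OF refl])
         (use prob_onD(3)[OF P] dc in \<open>auto simp: D_def C_def config_def\<close>)
    finally show "\<bar>integral\<^sup>L (distr \<nu>' (shift_space A) D) f - integral\<^sup>L \<mu> f\<bar> < \<epsilon>"
      using \<nu>'(3) f D.integral_distr[OF P' f_meas] by (auto simp: weak_nbhd_def F'_def)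
  qed
  then show "\<exists>\<nu>. periodic_measure A \<nu> \<and> (erg \<longrightarrow> ergodic_measure A \<nu>) \<and> \<nu> \<in> weak_nbhd A \<mu> F \<epsilon>"
    using D.periodic_measure_distr[OF \<nu>'(1)] D.ergodic_measure_distr \<nu>'(2) by blast
qed

lemma periodic_approximable_if_PA:
  fixes A :: "'a::discrete_topology set" and \<mu> :: "('g::group_add \<Rightarrow> 'a) measure"
  assumes "PA TYPE('g)" "finite A" "invariant_measure A \<mu>"
  shows "periodic_approximable False A \<mu>"
  using assms(1)
  by (intro periodic_approximable_transfer[OF assms(2,3)]) (simp add: PA_def periodic_approximable_def)

lemma periodic_approximable_if_EPA:
  fixes A :: "'a::discrete_topology set" and \<mu> :: "('g::group_add \<Rightarrow> 'a) measure"
  assumes "EPA TYPE('g)" "finite A" "invariant_measure A \<mu>"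
  shows "periodic_approximable True A \<mu>"
  using assms(1)
  by (intro periodic_approximable_transfer[OF assms(2,3)]) (simp add: EPA_def periodic_approximable_def)

lemma PA_if_EPA: "EPA TYPE('g::group_add) \<Longrightarrow> PA TYPE('g)"
  unfolding PA_def EPA_def by blast

section \<open>Finitely generated PA groups are countable and residually finite\<close>

lemma countable_UNIV_if_finitely_generated:
  assumes "finitely_generated TYPE('g::group_add)"
  shows "countable (UNIV :: 'g set)"
proof -
  obtain S :: "'g set" where S: "finite S" "gen_subgroup S = UNIV"
    using assms unfolding finitely_generated_def by blast
  define W where "W = rec_nat (insert 0 S) (\<lambda>_ X. X \<union> (\<lambda>(x, y). x + y) ` (X \<times> X) \<union> uminus ` X)"
  have W0: "W 0 = insert 0 S"
    and WS: "W (Suc n) = W n \<union> (\<lambda>(x, y). x + y) ` (W n \<times> W n) \<union> uminus ` W n" for n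
    by (simp_all add: W_def)
  have "finite (W n)" for n by (induction n) (use S(1) in \<open>simp_all add: W0 WS\<close>)
  have W_mono: "W n \<subseteq> W m" if "n \<le> m" for n m
    using that by (induction m) (auto simp: WS le_Suc_eq)
  have "x \<in> (\<Union>n. W n)" if "x \<in> gen_subgroup S" for x
    using that
  proof (induction rule: gen_subgroup.induct)
    case (gen_add x y)
    then obtain n m where "x \<in> W n" "y \<in> W m" by blast
    then have "x \<in> W (max n m)" "y \<in> W (max n m)" using W_mono by (meson max.cobounded1 max.cobounded2 subsetD)+
    then have "x + y \<in> W (Suc (max n m))" unfolding WS by blast
    then show ?case by blast
  next
    case (gen_uminus x)
    then obtain n where "x \<in> W n" by blast
    then have "- x \<in> W (Suc n)" unfolding WS by blast
    then show ?case by blast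
  qed (use W0 in blast)+
  then have "UNIV \<subseteq> (\<Union>n. W n)" using S(2) by blast
  moreover have "countable (\<Union>n. W n)" using \<open>\<And>n. finite (W n)\<close> by (intro countable_UN) (auto intro: countable_finite)
  ultimately show ?thesis by (rule countable_subset)
qed

definition coin_product :: "(nat \<Rightarrow> nat) measure" where
  "coin_product = PiM UNIV (\<lambda>_. measure_pmf (pmf_of_set {0, 1}))"

text \<open>The \<open>min 1\<close> only matters off the full-measure set of \<open>0\<close>-\<open>1\<close> sequences; it makes the map
  land in \<open>{0,1}\<^sup>G\<close> everywhere.\<close>

definition bernoulli_config :: "('g \<Rightarrow> nat) \<Rightarrow> (nat \<Rightarrow> nat) \<Rightarrow> ('g \<Rightarrow> nat)" where
  "bernoulli_config idx x = (\<lambda>g. min 1 (x (idx g)))"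

definition bernoulli_shift :: "('g \<Rightarrow> nat) \<Rightarrow> ('g::group_add \<Rightarrow> nat) measure" where
  "bernoulli_shift idx = distr coin_product (shift_space {0, 1}) (bernoulli_config idx)"

lemma prob_space_coin_product: "prob_space coin_product"
  unfolding coin_product_def by (intro prob_space_PiM prob_space_measure_pmf)

lemma measurable_bernoulli_config:
  "bernoulli_config idx \<in> measurable coin_product (shift_space {0, 1})"
  unfolding shift_space_def
proof (rule measurable_restrict_space2)
  show "bernoulli_config idx \<in> space coin_product \<rightarrow> config {0, 1}"
    by (auto simp: bernoulli_config_def config_def min_def)
  have "sets coin_product = sets (PiM UNIV (\<lambda>_::nat. borel :: nat measure))"
    unfolding coin_product_def by (rule sets_PiM_cong) (auto simp: sets_borel_eq_count_space)
  also have "\<dots> = sets (borel :: (nat \<Rightarrow> nat) measure)" by (rule sets_PiM_equal_borel)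
  finally have "measurable coin_product borel = measurable (borel :: (nat \<Rightarrow> nat) measure) borel"
    by (rule measurable_cong_sets) simp
  moreover have "continuous_on UNIV (bernoulli_config idx)"
    unfolding bernoulli_config_def
  proof (rule continuous_on_coordinatewise_then_product)
    fix g
    show "continuous_on UNIV (\<lambda>x::nat \<Rightarrow> nat. min 1 (x (idx g)))"
      by (rule continuous_on_compose2[of UNIV "\<lambda>n::nat. min 1 n" UNIV "\<lambda>x. x (idx g)"]) auto
  qed
  ultimately show "bernoulli_config idx \<in> borel_measurable coin_product"
    by (metis borel_measurable_continuous_onI)
qed

text \<open>Shifting by \<open>h\<close> permutes the coins: it is the reindexing of the product by the bijection
  of \<open>\<nat>\<close> that moves \<open>idx g\<close> to \<open>idx (g + h)\<close> and fixes the rest.\<close>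

lemma invariant_measure_bernoulli_shift:
  assumes inj: "inj idx"
  shows "invariant_measure {0, 1} (bernoulli_shift idx)"
  unfolding invariant_measure_def
proof (intro conjI allI)
  show "prob_on {0, 1} (bernoulli_shift idx)"
    unfolding prob_on_def bernoulli_shift_def
    using prob_space.prob_space_distr[OF prob_space_coin_product measurable_bernoulli_config] by simp
  fix h
  define \<pi> where "\<pi> n = (if n \<in> range idx then idx (inv idx n + h) else n)" for n
  have \<pi>_idx: "\<pi> (idx g) = idx (g + h)" for g using inj by (simp add: \<pi>_def)
  have "inj \<pi>"
  proof (rule injI)
    fix a b assume "\<pi> a = \<pi> b"
    then show "a = b"
      using inj by (auto simp: \<pi>_def inj_eq split: if_splits)
  qed
  define R where "R x = (\<lambda>n. x (\<pi> n))" for x :: "nat \<Rightarrow> nat"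
  have R: "distr coin_product coin_product R = coin_product"
    using distr_PiM_reindex[of UNIV "\<lambda>_. measure_pmf (pmf_of_set {0, 1::nat})" \<pi> UNIV] \<open>inj \<pi>\<close>
    unfolding coin_product_def R_def by (simp add: prob_space_measure_pmf restrict_UNIV)
  have R_measurable: "R \<in> measurable coin_product coin_product"
    unfolding coin_product_def R_def
    by (rule measurable_PiM_single'[where f="\<lambda>n x. x (\<pi> n)", simplified]) (auto simp: space_PiM)
  have commute: "shift_act h \<circ> bernoulli_config idx = bernoulli_config idx \<circ> R"
    by (auto simp: shift_act_def bernoulli_config_def R_def \<pi>_idx)
  have "distr (bernoulli_shift idx) (shift_space {0, 1}) (shift_act h)
      = distr coin_product (shift_space {0, 1}) (shift_act h \<circ> bernoulli_config idx)"
    unfolding bernoulli_shift_def by (rule distr_distr[OF measurable_shift_act measurable_bernoulli_config])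
  also have "\<dots> = distr coin_product (shift_space {0, 1}) (bernoulli_config idx \<circ> R)"
    by (simp only: commute)
  also have "\<dots> = distr (distr coin_product coin_product R) (shift_space {0, 1}) (bernoulli_config idx)"
    by (rule distr_distr[OF measurable_bernoulli_config R_measurable, symmetric])
  finally show "distr (bernoulli_shift idx) (shift_space {0, 1}) (shift_act h) = bernoulli_shift idx"
    by (simp add: R bernoulli_shift_def)
qed

lemma integral_bernoulli_shift_disagree_pos:
  fixes idx :: "'g::group_add \<Rightarrow> nat"
  assumes inj: "inj idx" and ij: "i \<noteq> j"
  shows "(\<integral>\<omega>. indicator {\<omega>. \<omega> i \<noteq> \<omega> j} \<omega> \<partial>bernoulli_shift idx) > (0::real)"
proof -
  interpret coins: prob_space coin_product by (rule prob_space_coin_product)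
  define D where "D = {\<omega>::'g \<Rightarrow> nat. \<omega> i \<noteq> \<omega> j}"
  define Z where "Z = prod_emb UNIV (\<lambda>_. measure_pmf (pmf_of_set {0, 1::nat})) {idx i, idx j}
    (\<Pi>\<^sub>E k\<in>{idx i, idx j}. if k = idx i then {0} else {1})"
  have idx_ij: "idx i \<noteq> idx j" using inj ij by (auto dest: injD)
  have Z_sets: "Z \<in> sets coin_product"
    unfolding Z_def coin_product_def by (rule sets_PiM_I) auto
  have "emeasure coin_product Z
      = (\<Prod>k\<in>{idx i, idx j}. emeasure (measure_pmf (pmf_of_set {0, 1::nat})) (if k = idx i then {0} else {1}))"
    unfolding Z_def coin_product_def by (rule emeasure_PiM_emb) (auto simp: prob_space_measure_pmf)
  also have "\<dots> = ennreal (1/2) * ennreal (1/2)" using idx_ij by (simp add: emeasure_pmf_single)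
  also have "\<dots> = ennreal (1/4)" by (subst ennreal_mult[symmetric]) auto
  finally have measure_Z: "measure coin_product Z = 1/4" by (simp add: measure_def)
  have D_cont: "continuous_on UNIV (indicator D :: _ \<Rightarrow> real)"
    unfolding D_def by (rule continuous_on_finite_dependence[of "{i, j}"]) (auto simp: indicator_def)
  have D_measurable: "(indicator D :: _ \<Rightarrow> real) \<in> borel_measurable (shift_space {0, 1})"
    by (rule borel_measurable_continuous_on_config[OF continuous_on_subset[OF D_cont subset_UNIV]])
  have "(\<integral>\<omega>. indicator D \<omega> \<partial>bernoulli_shift idx)
      = (\<integral>x. indicator D (bernoulli_config idx x) \<partial>coin_product :: real)"
    unfolding bernoulli_shift_def
    by (rule Bochner_Integration.integral_distr[OF measurable_bernoulli_config D_measurable])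
  also have "\<dots> \<ge> (\<integral>x. indicator Z x \<partial>coin_product)"
  proof (rule integral_mono)
    show "integrable coin_product (indicator Z :: _ \<Rightarrow> real)"
      using Z_sets by (simp add: less_top[symmetric])
    show "integrable coin_product (\<lambda>x. indicator D (bernoulli_config idx x) :: real)"
      using measurable_comp[OF measurable_bernoulli_config D_measurable]
      by (intro coins.integrable_const_bound[where B=1]) (auto simp: comp_def)
    show "indicator Z x \<le> (indicator D (bernoulli_config idx x) :: real)" for x
      using idx_ij
      by (auto simp: indicator_def Z_def D_def prod_emb_def bernoulli_config_def PiE_iff)
  qed
  finally show ?thesis using measure_Z Z_sets by (simp add: D_def)
qed

definition residually_finite :: "'g::group_add itself \<Rightarrow> bool" where
  "residually_finite _ \<longleftrightarrow> (\<forall>g::'g. g \<noteq> 0 \<longrightarrow> (\<exists>K. normal_subgroup K \<and> finite (quot K) \<and> g \<notin> K))"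

text \<open>Approximate the Bernoulli shift by a periodic measure so closely that it still gives
  positive mass to the event \<open>\<omega> 0 \<noteq> \<omega> g\<close>; the stabiliser of its support then excludes \<open>g\<close>.\<close>

lemma residually_finite_if_PA:
  assumes G: "countable (UNIV :: 'g::group_add set)" and PA: "PA TYPE('g)"
  shows "residually_finite TYPE('g)"
  unfolding residually_finite_def
proof (intro allI impI)
  fix g :: 'g assume "g \<noteq> 0"
  define D where "D = (indicator {\<omega>::'g \<Rightarrow> nat. \<omega> 0 \<noteq> \<omega> g} :: _ \<Rightarrow> real)"
  define \<mu> where "\<mu> = bernoulli_shift (to_nat_on (UNIV :: 'g set))"
  have inj: "inj (to_nat_on (UNIV :: 'g set))" by (rule inj_on_to_nat_on[OF G])
  have D_cont: "continuous_on S D" for S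
    unfolding D_def by (rule continuous_on_finite_dependence[of "{0, g}"]) (auto simp: indicator_def)
  have pos: "integral\<^sup>L \<mu> D > 0"
    using integral_bernoulli_shift_disagree_pos[OF inj \<open>g \<noteq> 0\<close>[symmetric]] by (simp add: \<mu>_def D_def)
  have "periodic_approximable False {0, 1} \<mu>"
    using periodic_approximable_if_PA[OF PA _ invariant_measure_bernoulli_shift[OF inj]]
    by (simp add: \<mu>_def)
  then have "\<exists>\<nu>. periodic_measure {0, 1} \<nu> \<and> (False \<longrightarrow> ergodic_measure {0, 1} \<nu>)
      \<and> \<nu> \<in> weak_nbhd {0, 1} \<mu> {D} (integral\<^sup>L \<mu> D)"
    unfolding periodic_approximable_def using pos D_cont by (simp add: cont_funs_def)
  then obtain \<nu> where \<nu>: "periodic_measure {0, 1} \<nu>" "\<nu> \<in> weak_nbhd {0, 1} \<mu> {D} (integral\<^sup>L \<mu> D)"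
    by blast
  obtain S where S: "finite S" "S \<subseteq> config {0, 1}" "\<And>h \<omega>. \<omega> \<in> S \<Longrightarrow> shift_act h \<omega> \<in> S"
    "measure \<nu> S = 1"
    using periodic_measure_invariant_support[OF \<nu>(1)] by metis
  have P: "prob_on {0, 1} \<nu>" and "\<bar>integral\<^sup>L \<nu> D - integral\<^sup>L \<mu> D\<bar> < integral\<^sup>L \<mu> D"
    using \<nu>(2) by (simp_all add: weak_nbhd_def)
  then have "integral\<^sup>L \<nu> D \<noteq> 0" by linarith
  then have "(\<Sum>\<omega>\<in>S. D \<omega> * measure \<nu> {\<omega>}) \<noteq> 0"
    by (simp add: integral_finite_support[OF P S(1,2,4) borel_measurable_continuous_on_config[OF D_cont]])
  then have "\<exists>\<omega>\<in>S. D \<omega> * measure \<nu> {\<omega>} \<noteq> 0"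
    using sum.neutral[of S "\<lambda>\<omega>. D \<omega> * measure \<nu> {\<omega>}"] by blast
  then obtain \<omega> where \<omega>: "\<omega> \<in> S" "\<omega> 0 \<noteq> \<omega> g"
    by (auto simp: D_def indicator_def)
  show "\<exists>K. normal_subgroup K \<and> finite (quot K) \<and> g \<notin> K"
  proof (intro exI conjI)
    show "normal_subgroup (stabilizer S)" by (rule normal_subgroup_stabilizer[OF S(3)])
    show "finite (quot (stabilizer S))" by (rule finite_quot_stabilizer[OF S(3,1)])
    have "shift_act g \<omega> 0 \<noteq> \<omega> 0" using \<omega>(2) by (simp add: shift_act_def)
    then have "shift_act g \<omega> \<noteq> \<omega>" by auto
    then show "g \<notin> stabilizer S" using \<omega>(1) unfolding stabilizer_def by blast
  qed
qed

lemma residually_finite_separating_family: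
  assumes RF: "residually_finite TYPE('g::group_add)"
  shows "\<exists>K::'g \<Rightarrow> 'g set. \<forall>g. normal_subgroup (K g) \<and> finite (quot (K g)) \<and> (g \<noteq> 0 \<longrightarrow> g \<notin> K g)"
proof (rule choice, rule allI)
  fix g :: 'g
  show "\<exists>K. normal_subgroup K \<and> finite (quot K) \<and> (g \<noteq> 0 \<longrightarrow> g \<notin> K)"
  proof (cases "g = 0")
    case True
    have "normal_subgroup (UNIV :: 'g set)" "finite (quot (UNIV :: 'g set))"
      by (simp_all add: normal_subgroup_UNIV quot_UNIV)
    then show ?thesis using True by (intro exI[of _ "UNIV :: 'g set"]) simp
  next
    case False
    then show ?thesis using RF unfolding residually_finite_def by blast
  qed
qed

lemma rf_approx_within:
  fixes L :: "nat \<Rightarrow> 'g::group_add set"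
  assumes G: "countable (UNIV :: 'g set)" and RF: "residually_finite TYPE('g)"
    and L: "\<And>n. normal_subgroup (L n)" "\<And>n. finite (quot (L n))"
  obtains \<Gamma> where "rf_approx \<Gamma>" "\<And>n. \<Gamma> n \<subseteq> L n"
proof -
  obtain K where K: "\<forall>g::'g. normal_subgroup (K g) \<and> finite (quot (K g)) \<and> (g \<noteq> 0 \<longrightarrow> g \<notin> K g)"
    using residually_finite_separating_family[OF RF] by blast
  define M where "M k = L k \<inter> K (from_nat_into UNIV k)" for k
  have M: "normal_subgroup (M k)" "finite (quot (M k))" for k
    unfolding M_def using K L by (simp_all add: normal_subgroup_Int finite_quot_Int)
  define \<Gamma> where "\<Gamma> = rec_nat (M 0) (\<lambda>n \<Gamma>. \<Gamma> \<inter> M (Suc n))"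
  have \<Gamma>_0: "\<Gamma> 0 = M 0" and \<Gamma>_Suc: "\<Gamma> (Suc n) = \<Gamma> n \<inter> M (Suc n)" for n
    by (simp_all add: \<Gamma>_def)
  have \<Gamma>: "normal_subgroup (\<Gamma> n) \<and> finite (quot (\<Gamma> n))" for n
    by (induction n) (simp_all add: \<Gamma>_0 \<Gamma>_Suc M normal_subgroup_Int finite_quot_Int)
  have \<Gamma>_M: "\<Gamma> n \<subseteq> M n" for n
    by (cases n) (auto simp: \<Gamma>_0 \<Gamma>_Suc)
  show ?thesis
  proof (rule that)
    show "\<Gamma> n \<subseteq> L n" for n using \<Gamma>_M by (auto simp: M_def)
    have "x = 0" if "x \<in> (\<Inter>n. \<Gamma> n)" for x
    proof -
      obtain k where "from_nat_into UNIV k = x" using from_nat_into_surj[OF G UNIV_I] by blast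
      then have "x \<in> K x" using that \<Gamma>_M[of k] by (auto simp: M_def)
      then show ?thesis using K by blast
    qed
    moreover have "0 \<in> \<Gamma> n" for n using \<Gamma> normal_subgroupD(1) by blast
    ultimately have "(\<Inter>n. \<Gamma> n) = {0}" by blast
    then show "rf_approx \<Gamma>" using \<Gamma> by (simp add: rf_approx_def \<Gamma>_Suc)
  qed
qed

section \<open>Residually finite models\<close>

lemma rf_model_if_periodic_approximable:
  fixes A :: "'a::discrete_topology set" and \<mu> :: "('g::group_add \<Rightarrow> 'a) measure"
  assumes G: "countable (UNIV :: 'g set)" and RF: "residually_finite TYPE('g)"
    and A: "finite A" and I: "invariant_measure A \<mu>" and approx: "periodic_approximable erg A \<mu>"
  shows "rf_model A \<mu> \<and> (erg \<longrightarrow> erf_model A \<mu>)"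
proof -
  define Q where "Q \<nu> \<longleftrightarrow> periodic_measure A \<nu> \<and> (erg \<longrightarrow> ergodic_measure A \<nu>)"
    for \<nu> :: "('g \<Rightarrow> 'a) measure"
  have "\<exists>\<nu>. Q \<nu> \<and> \<nu> \<in> weak_nbhd A \<mu> F \<epsilon>" if "finite F" "F \<subseteq> cont_funs A" "\<epsilon> > 0" for F \<epsilon>
    using approx that unfolding periodic_approximable_def Q_def by blast
  then obtain \<nu>s where \<nu>s: "\<And>n. Q (\<nu>s n)"
    and conv: "\<And>F \<epsilon>. finite F \<Longrightarrow> F \<subseteq> cont_funs A \<Longrightarrow> \<epsilon> > 0 \<Longrightarrow>
      eventually (\<lambda>n. \<nu>s n \<in> weak_nbhd A \<mu> F \<epsilon>) sequentially"
    using weak_approximating_sequence[OF G A invariant_measureD(1)[OF I]] by metis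
  have "\<exists>S. finite S \<and> S \<subseteq> config A \<and> (\<forall>h. \<forall>\<omega>\<in>S. shift_act h \<omega> \<in> S)
      \<and> measure (\<nu>s n) S = 1 \<and> (\<forall>\<omega>\<in>S. measure (\<nu>s n) {\<omega>} > 0)" for n
    using periodic_measure_invariant_support[of A "\<nu>s n"] \<nu>s[of n] unfolding Q_def by metis
  then obtain Ss where Ss: "\<And>n. finite (Ss n)" "\<And>n. Ss n \<subseteq> config A"
    "\<And>n h \<omega>. \<omega> \<in> Ss n \<Longrightarrow> shift_act h \<omega> \<in> Ss n" "\<And>n. measure (\<nu>s n) (Ss n) = 1"
    "\<And>n \<omega>. \<omega> \<in> Ss n \<Longrightarrow> measure (\<nu>s n) {\<omega>} > 0"
    by metis
  have "normal_subgroup (stabilizer (Ss n))" "finite (quot (stabilizer (Ss n)))" for n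
    using Ss(1,3) by (simp_all add: normal_subgroup_stabilizer finite_quot_stabilizer)
  then obtain \<Gamma> where \<Gamma>: "rf_approx \<Gamma>" "\<And>n. \<Gamma> n \<subseteq> stabilizer (Ss n)"
    using rf_approx_within[OF G RF, of "\<lambda>n. stabilizer (Ss n)"] by blast
  have models: "periodic_model (\<Gamma> n) A (\<nu>s n) (Ss n)" for n
  proof
    show "normal_subgroup (\<Gamma> n)" "finite (quot (\<Gamma> n))" using \<Gamma>(1) by (simp_all add: rf_approx_def)
    show "invariant_measure A (\<nu>s n)" using \<nu>s[of n] by (simp add: Q_def periodic_measure_def)
    show "fixed_by (\<Gamma> n) \<omega>" if "\<omega> \<in> Ss n" for \<omega>
      using fixed_by_subset[OF \<Gamma>(2) fixed_by_stabilizer[OF that]] .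
  qed (use A Ss in auto)
  show ?thesis
    using rf_model_of_periodic_models[OF \<Gamma>(1) models conv]
      erf_model_of_periodic_models[OF \<Gamma>(1) models conv] \<nu>s
    by (auto simp: Q_def)
qed

theorem mainTheorem10:
  fixes A :: "'a::discrete_topology set" and \<mu> :: "('g::group_add \<Rightarrow> 'a) measure"
  assumes "finitely_generated TYPE('g)"
    and "finite A"
    and "invariant_measure A \<mu>"
  shows "(PA TYPE('g) \<longrightarrow> rf_model A \<mu>) \<and> (EPA TYPE('g) \<longrightarrow> erf_model A \<mu>)"
proof (intro conjI impI)
  have G: "countable (UNIV :: 'g set)" by (rule countable_UNIV_if_finitely_generated[OF assms(1)])
  show "rf_model A \<mu>" if PA: "PA TYPE('g)"
    using rf_model_if_periodic_approximable[OF G residually_finite_if_PA[OF G PA] assms(2,3)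
        periodic_approximable_if_PA[OF PA assms(2,3)]]
    by blast
  show "erf_model A \<mu>" if EPA: "EPA TYPE('g)"
    using rf_model_if_periodic_approximable[OF G residually_finite_if_PA[OF G PA_if_EPA[OF EPA]]
        assms(2,3) periodic_approximable_if_EPA[OF EPA assms(2,3)]]
    by blast
qed

end
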